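(* In the setting below, the map $\phi:\mathcal{F}(\mathcal{P}_\lambda)\to\mathcal{F}(\Gamma_{\mathbf{k}})$ is an isomorphism of posets (with both sides ordered by inclusion), and $\dim\phi(F)=\dim F$ for every face $F$ of $\mathcal{P}_\lambda$.
   Context: Let $\mathbf{k}=(k_1,\dots,k_s)$ be positive integers with sum $n$, $n_0=0$, $n_i=\sum_{j\le i}k_j$, and $\lambda=(\lambda_1,\dots,\lambda_n)$ real with $\lambda_1=\cdots=\lambda_{n_1}>\lambda_{n_1+1}=\cdots=\lambda_{n_2}>\cdots>\lambda_{n_{s-1}+1}=\cdots=\lambda_n$. Let $I=\{(i,j)\in\mathbb{Z}^2:i,j\ge1,i+j\le n\}$; $\mathcal{P}_\lambda=\{x=(x_{i,j})_{(i,j)\in I}: x_{i,j+1}\ge x_{i,j}\ge x_{i+1,j}\ \forall (i,j)\in I\}$ with $x_{i,n+1-i}:=\lambda_i$; $\mathcal{F}(\mathcal{P}_\lambda)$ is its set of nonempty faces. $Q^+$ is the directed graph on $\mathbb{Z}_{\ge0}^2$ with edges $((i,j),(i,j+1))$, $((i,j),(i+1,j))$. Terminal vertices $T_{\mathbf{k}}=\{(n_\ell,n-n_\ell):0\le\ell\le s\}$; $\Gamma_{\mathbf{k}}$ is the induced subgraph of $Q^+$ on $\{(a,b):a\le c,b\le d\text{ for some }(c,d)\in T_{\mathbf{k}}\}$. A positive path is a shortest directed path in $\Gamma_{\mathbf{k}}$ from $(0,0)$ to a terminal vertex. A face of $\Gamma_{\mathbf{k}}$ is a subgraph containing all terminal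 vertices that is a union of positive paths; $\mathcal{F}(\Gamma_{\mathbf{k}})$ is the set of faces; the dimension of a face $\gamma$ is $\operatorname{rank}H_1(\gamma)$ viewing $\gamma$ as a 1-dimensional CW complex. For a face $F$ of $\mathcal{P}_\lambda$, $\phi(F)$ is the subgraph of $Q^+$ whose edges are: all $((0,i),(0,i+1))$ and $((i,0),(i+1,0))$, $0\le i\le n-1$; $((i-1,j),(i,j))$ for $(i,j)\in I$ whenever some $x\in F$ has $x_{i,j}<x_{i,j+1}$; $((i,j-1),(i,j))$ for $(i,j)\in I$ whenever some $x\in F$ has $x_{i,j}>x_{i+1,j}$; its vertices are the endpoints of these edges. *)

theory Defs
  imports "HOL-Analysis.Analysis" "HOL-Library.Function_Algebras"
begin

instantiation "fun" :: (type, real_vector) real_vector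
begin
definition scaleR_fun_def: "scaleR r f = (\<lambda>x. r *\<^sub>R f x)"
instance
  by standard (simp_all add: scaleR_fun_def fun_eq_iff scaleR_add_right scaleR_add_left)
end

text \<open>Points of the polytope are functions x :: nat * nat => real, with x (i,j) the
coordinate x_{i,j} for (i,j) in I, and all other coordinates fixed to 0, so that
the polytope lives in a copy of R^I.\<close>

definition GT_index :: "nat \<Rightarrow> (nat \<times> nat) set" where
  "GT_index n = {(i, j). 1 \<le> i \<and> 1 \<le> j \<and> i + j \<le> n}"

text \<open>Extension by the boundary values x_{i,n+1-i} := lambda_i.\<close>
definition GT_ext :: "nat \<Rightarrow> (nat \<Rightarrow> real) \<Rightarrow> (nat \<times> nat \<Rightarrow> real) \<Rightarrow> nat \<times> nat \<Rightarrow> real" where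
  "GT_ext n lam x = (\<lambda>(i, j). if i + j = n + 1 then lam i else x (i, j))"

definition GT_polytope :: "nat \<Rightarrow> (nat \<Rightarrow> real) \<Rightarrow> (nat \<times> nat \<Rightarrow> real) set" where
  "GT_polytope n lam =
     {x. (\<forall>p. p \<notin> GT_index n \<longrightarrow> x p = 0) \<and>
         (\<forall>(i, j) \<in> GT_index n.
            GT_ext n lam x (i, j + 1) \<ge> GT_ext n lam x (i, j) \<and>
            GT_ext n lam x (i, j) \<ge> GT_ext n lam x (i + 1, j))}"

definition nonempty_faces :: "'a::real_vector set \<Rightarrow> 'a set set" where
  "nonempty_faces P = {F. F face_of P \<and> F \<noteq> {}}"

definition affine_dim :: "'a::real_vector set \<Rightarrow> nat" where
  "affine_dim F = dim {y - x | x y. x \<in> F \<and> y \<in> F}"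

type_synonym vgraph = "(nat \<times> nat) set \<times> ((nat \<times> nat) \<times> (nat \<times> nat)) set"

definition subgraph_le :: "vgraph \<Rightarrow> vgraph \<Rightarrow> bool" where
  "subgraph_le g h \<longleftrightarrow> fst g \<subseteq> fst h \<and> snd g \<subseteq> snd h"

definition Qplus_edges :: "((nat \<times> nat) \<times> (nat \<times> nat)) set" where
  "Qplus_edges = {((i, j), (i, j + 1)) | i j. True} \<union> {((i, j), (i + 1, j)) | i j. True}"

definition psum :: "nat list \<Rightarrow> nat \<Rightarrow> nat" where
  "psum k l = sum_list (take l k)"

definition terminals :: "nat list \<Rightarrow> (nat \<times> nat) set" where
  "terminals k = {(psum k l, sum_list k - psum k l) | l. l \<le> length k}"

definition Gamma_vertices :: "nat list \<Rightarrow> (nat \<times> nat) set" where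
  "Gamma_vertices k = {(a, b). \<exists>(c, d) \<in> terminals k. a \<le> c \<and> b \<le> d}"

definition Gamma_edges :: "nat list \<Rightarrow> ((nat \<times> nat) \<times> (nat \<times> nat)) set" where
  "Gamma_edges k = {(u, v) \<in> Qplus_edges. u \<in> Gamma_vertices k \<and> v \<in> Gamma_vertices k}"

definition Gamma_path :: "nat list \<Rightarrow> (nat \<times> nat) list \<Rightarrow> bool" where
  "Gamma_path k vs \<longleftrightarrow> vs \<noteq> [] \<and> set vs \<subseteq> Gamma_vertices k \<and>
     (\<forall>i. Suc i < length vs \<longrightarrow> (vs ! i, vs ! Suc i) \<in> Gamma_edges k)"

definition path_graph :: "(nat \<times> nat) list \<Rightarrow> vgraph" where
  "path_graph vs = (set vs, {(vs ! i, vs ! Suc i) | i. Suc i < length vs})"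

definition positive_path :: "nat list \<Rightarrow> (nat \<times> nat) list \<Rightarrow> bool" where
  "positive_path k vs \<longleftrightarrow> Gamma_path k vs \<and> hd vs = (0, 0) \<and> last vs \<in> terminals k \<and>
     (\<forall>ws. Gamma_path k ws \<and> hd ws = (0, 0) \<and> last ws = last vs \<longrightarrow> length vs \<le> length ws)"

definition Gamma_faces :: "nat list \<Rightarrow> vgraph set" where
  "Gamma_faces k = {g. terminals k \<subseteq> fst g \<and>
     (\<exists>Ps. (\<forall>vs\<in>Ps. positive_path k vs) \<and>
          fst g = (\<Union>vs\<in>Ps. fst (path_graph vs)) \<and>
          snd g = (\<Union>vs\<in>Ps. snd (path_graph vs)))}"

text \<open>Rank of H_1 of a finite graph viewed as a 1-dimensional CW complex:
#edges - #vertices + #connected components.\<close>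
definition graph_components :: "vgraph \<Rightarrow> (nat \<times> nat) set set" where
  "graph_components g =
     fst g // {(u, v). u \<in> fst g \<and> v \<in> fst g \<and> (u, v) \<in> (snd g \<union> (snd g)\<inverse>)\<^sup>*}"

definition graph_dim :: "vgraph \<Rightarrow> int" where
  "graph_dim g = int (card (snd g)) - int (card (fst g)) + int (card (graph_components g))"

definition phi :: "nat \<Rightarrow> (nat \<Rightarrow> real) \<Rightarrow> (nat \<times> nat \<Rightarrow> real) set \<Rightarrow> vgraph" where
  "phi n lam F =
     (let E = {((0, i), (0, i + 1)) | i. i \<le> n - 1} \<union> {((i, 0), (i + 1, 0)) | i. i \<le> n - 1}
            \<union> {((i - 1, j), (i, j)) | i j. (i, j) \<in> GT_index n \<and>
                   (\<exists>x\<in>F. GT_ext n lam x (i, j) < GT_ext n lam x (i, j + 1))}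
            \<union> {((i, j - 1), (i, j)) | i j. (i, j) \<in> GT_index n \<and>
                   (\<exists>x\<in>F. GT_ext n lam x (i, j) > GT_ext n lam x (i + 1, j))}
      in ({u. \<exists>v. (u, v) \<in> E} \<union> {v. \<exists>u. (u, v) \<in> E}, E))"

end

theory Submission
  imports Defs
begin

text \<open>A nonempty face \<open>F\<close> of the Gelfand--Tsetlin polytope is cut out by the defining inequalities
  that are tight on all of \<open>F\<close>, and \<open>phi F\<close> records exactly the remaining ones as edges, so \<open>phi\<close>
  is an order embedding.  By interlacing, a vertex \<open>(a, b)\<close> of \<open>phi F\<close> has an incoming edge iff
  \<open>x\<^sub>a\<^sub>+\<^sub>1\<^sub>,\<^sub>b < x\<^sub>a\<^sub>,\<^sub>b\<^sub>+\<^sub>1\<close> somewhere on \<open>F\<close>, and then also an outgoing one unless it lies on the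
  boundary \<open>a + b = n\<close>, where the gap is the drop \<open>\<lambda>\<^sub>a > \<lambda>\<^sub>a\<^sub>+\<^sub>1\<close>, i.e. \<open>a\<close> is a block end and
  \<open>(a, b)\<close> a terminal.  So every edge of \<open>phi F\<close> extends to a positive path.  Conversely, a union
  of positive paths is \<open>phi\<close> of the face spanned by \<open>\<lambda>\<^sub>n + \<Sum>\<^sub>p w\<^sub>p 1\<^sub>p\<close>, where \<open>1\<^sub>p\<close> indicates the
  cells beyond the path \<open>p\<close> and the weights \<open>w\<^sub>p \<ge> 0\<close> share out the drops of \<open>\<lambda>\<close> among the
  paths ending at each terminal.

  For the dimension: \<open>phi F\<close> is connected and every vertex but the origin has one or two incoming
  edges, two exactly at the corner cells where both inequalities are strict; hence the rank of
  \<open>H\<^sub>1\<close> is the number of corner cells.  A direction within \<open>F\<close> is determined by its values at the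
  corner cells, since it is constant along tight inequalities, so \<open>dim F\<close> is the same number.\<close>

section \<open>Walks\<close>

fun walk :: "('a \<times> 'a) set \<Rightarrow> 'a list \<Rightarrow> bool" where
  "walk E [] = False"
| "walk E [u] = True"
| "walk E (u # w # vs) \<longleftrightarrow> (u, w) \<in> E \<and> walk E (w # vs)"

fun walk_edges :: "'a list \<Rightarrow> ('a \<times> 'a) set" where
  "walk_edges [] = {}"
| "walk_edges [u] = {}"
| "walk_edges (u # w # vs) = insert (u, w) (walk_edges (w # vs))"

lemma walk_iff_nth: "walk E vs \<longleftrightarrow> vs \<noteq> [] \<and> (\<forall>i. Suc i < length vs \<longrightarrow> (vs ! i, vs ! Suc i) \<in> E)"
proof (induction E vs rule: walk.induct)
  case (3 E u w vs)
  show ?case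
  proof
    assume "walk E (u # w # vs)"
    then show "u # w # vs \<noteq> [] \<and> (\<forall>i. Suc i < length (u # w # vs) \<longrightarrow> ((u # w # vs) ! i, (u # w # vs) ! Suc i) \<in> E)"
      using 3 by (auto simp: nth_Cons split: nat.splits)
  next
    assume a: "u # w # vs \<noteq> [] \<and> (\<forall>i. Suc i < length (u # w # vs) \<longrightarrow> ((u # w # vs) ! i, (u # w # vs) ! Suc i) \<in> E)"
    then have "\<forall>i. Suc i < length (w # vs) \<longrightarrow> ((w # vs) ! i, (w # vs) ! Suc i) \<in> E"
      by (metis Suc_less_eq length_Cons nth_Cons_Suc)
    moreover have "(u, w) \<in> E" using a by force
    ultimately show "walk E (u # w # vs)" using 3 by simp
  qed
qed auto

lemma walk_edges_eq_nth: "walk_edges vs = {(vs ! i, vs ! Suc i) | i. Suc i < length vs}"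
proof (induction vs rule: walk_edges.induct)
  case (3 u w vs)
  have "{((u # w # vs) ! i, (u # w # vs) ! Suc i) | i. Suc i < length (u # w # vs)}
      = insert (u, w) {((w # vs) ! i, (w # vs) ! Suc i) | i. Suc i < length (w # vs)}"
    (is "?L = ?R")
  proof
    show "?R \<subseteq> ?L" by (auto intro: exI[of _ 0] exI[of _ "Suc _"])
    show "?L \<subseteq> ?R"
    proof
      fix e assume "e \<in> ?L"
      then obtain i where i: "e = ((u # w # vs) ! i, (u # w # vs) ! Suc i)" "Suc i < length (u # w # vs)"
        by blast
      then show "e \<in> ?R" by (cases i) auto
    qed
  qed
  then show ?case using 3 by simp
qed auto

lemma walk_not_Nil: "walk E vs \<Longrightarrow> vs \<noteq> []"
  by (cases vs) auto

lemma walk_edges_subset: "walk E vs \<Longrightarrow> walk_edges vs \<subseteq> E"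
  by (induction E vs rule: walk.induct) auto

lemma walk_edge_vertices: "(u, w) \<in> walk_edges vs \<Longrightarrow> u \<in> set vs \<and> w \<in> set vs"
  by (induction vs rule: walk_edges.induct) auto

lemma vertex_on_walk_edge:
  "length vs \<ge> 2 \<Longrightarrow> x \<in> set vs \<Longrightarrow> (\<exists>y. (x, y) \<in> walk_edges vs) \<or> (\<exists>y. (y, x) \<in> walk_edges vs)"
proof (induction vs rule: walk_edges.induct)
  case (3 u w vs)
  then show ?case by (cases "x = u"; cases vs) auto
qed auto

lemma walk_Cons: "walk E (u # vs) \<longleftrightarrow> vs = [] \<or> (u, hd vs) \<in> E \<and> walk E vs"
  by (cases vs) auto

lemma walk_append: "walk E xs \<Longrightarrow> walk E ys \<Longrightarrow> (last xs, hd ys) \<in> E \<Longrightarrow> walk E (xs @ ys)"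
  by (induction E xs rule: walk.induct) (auto simp: walk_Cons)

lemma walk_edges_append:
  "xs \<noteq> [] \<Longrightarrow> ys \<noteq> [] \<Longrightarrow> walk_edges (xs @ ys) = walk_edges xs \<union> walk_edges ys \<union> {(last xs, hd ys)}"
proof (induction xs rule: walk_edges.induct)
  case (2 u) then show ?case by (cases ys) auto
qed auto

lemma walk_rtrancl: "walk E vs \<Longrightarrow> (hd vs, last vs) \<in> E\<^sup>*"
  by (induction E vs rule: walk.induct) (auto intro: converse_rtrancl_into_rtrancl)

lemma walk_in_edge: "walk E vs \<Longrightarrow> w \<in> set vs \<Longrightarrow> w \<noteq> hd vs \<Longrightarrow> \<exists>u. (u, w) \<in> walk_edges vs"
  by (induction E vs rule: walk.induct) auto

lemma walk_out_edge: "walk E vs \<Longrightarrow> w \<in> set vs \<Longrightarrow> w \<noteq> last vs \<Longrightarrow> \<exists>u. (w, u) \<in> walk_edges vs"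
  by (induction E vs rule: walk.induct) auto

section \<open>Walks in the quarter lattice\<close>

text \<open>Pairs of naturals are ordered componentwise (\<open>Product_Order\<close>).\<close>

definition unit_step :: "nat \<times> nat \<Rightarrow> nat \<times> nat \<Rightarrow> bool" where
  "unit_step u w \<longleftrightarrow> w = (fst u + 1, snd u) \<or> w = (fst u, snd u + 1)"

definition unit_steps :: "((nat \<times> nat) \<times> (nat \<times> nat)) set \<Rightarrow> bool" where
  "unit_steps E \<longleftrightarrow> (\<forall>(u, w) \<in> E. unit_step u w)"

abbreviation level :: "nat \<times> nat \<Rightarrow> nat" where
  "level u \<equiv> fst u + snd u"

lemma unit_stepsD: "unit_steps E \<Longrightarrow> (u, w) \<in> E \<Longrightarrow> unit_step u w"
  by (auto simp: unit_steps_def)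

lemma unit_step_le: "unit_step u w \<Longrightarrow> u \<le> w"
  by (auto simp: unit_step_def less_eq_prod_def)

lemma unit_step_level: "unit_step u w \<Longrightarrow> level w = level u + 1"
  by (auto simp: unit_step_def)

lemma le_level_eq_imp_eq: "p \<le> q \<Longrightarrow> level p = level q \<Longrightarrow> p = q"
  for p q :: "nat \<times> nat"
  by (auto simp: less_eq_prod_def prod_eq_iff)

context
  fixes E :: "((nat \<times> nat) \<times> (nat \<times> nat)) set"
  assumes E: "unit_steps E"
begin

lemma walk_edge_unit_step: "walk E vs \<Longrightarrow> (u, w) \<in> walk_edges vs \<Longrightarrow> unit_step u w"
  using walk_edges_subset unit_stepsD[OF E] by blast

lemma walk_hd_le: "walk E vs \<Longrightarrow> w \<in> set vs \<Longrightarrow> hd vs \<le> w"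
proof (induction vs rule: induct_list012)
  case (3 u x vs)
  then have "u \<le> x" using unit_step_le unit_stepsD[OF E] by auto
  then show ?case using 3 by (auto intro: order_trans)
qed auto

lemma walk_le_last: "walk E vs \<Longrightarrow> w \<in> set vs \<Longrightarrow> w \<le> last vs"
proof (induction vs arbitrary: w rule: induct_list012)
  case (3 u x vs)
  have IH: "\<And>w. w \<in> set (x # vs) \<Longrightarrow> w \<le> last (x # vs)" using 3 by simp
  have "u \<le> x" using 3(3) unit_step_le unit_stepsD[OF E] by simp
  show ?case
  proof (cases "w = u")
    case True
    have "x \<le> last (x # vs)" using IH by simp
    then show ?thesis using order_trans[OF \<open>u \<le> x\<close>] True by simp
  next
    case False
    then show ?thesis using 3(4) IH[of w] by simp
  qed
qed auto

lemma walk_level_last: "walk E vs \<Longrightarrow> level (last vs) = level (hd vs) + (length vs - 1)"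
proof (induction vs rule: induct_list012)
  case (3 u x vs)
  then have "level x = level u + 1" using unit_step_level unit_stepsD[OF E] by auto
  then show ?case using 3 by auto
qed auto

lemma walk_vertices_comparable: "walk E vs \<Longrightarrow> p \<in> set vs \<Longrightarrow> q \<in> set vs \<Longrightarrow> p \<le> q \<or> q \<le> p"
proof (induction vs rule: induct_list012)
  case (3 u x vs)
  then have "\<forall>w\<in>set (u # x # vs). u \<le> w" using walk_hd_le[of "u # x # vs"] by auto
  then show ?case using 3 by auto
qed auto

lemma walk_meets_column:
  "walk E vs \<Longrightarrow> w \<in> set vs \<Longrightarrow> fst (hd vs) \<le> a \<Longrightarrow> a \<le> fst w \<Longrightarrow> \<exists>c \<le> snd w. (a, c) \<in> set vs"
proof (induction vs rule: induct_list012)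
  case (2 u) then show ?case by (cases u) auto
next
  case (3 u x vs)
  then have step: "unit_step u x" using unit_stepsD[OF E] by simp
  show ?case
  proof (cases "w = u \<or> a < fst x")
    case True
    then have "a = fst u" using 3 step by (auto simp: unit_step_def)
    moreover have "u \<le> w" using walk_hd_le[OF 3(3,4)] by simp
    ultimately show ?thesis by (cases u) (auto simp: less_eq_prod_def)
  next
    case False
    then show ?thesis using 3 by (metis list.sel(1) not_le set_ConsD set_subset_Cons subsetD walk.simps(3))
  qed
qed auto

lemma walk_meets_level:
  "walk E vs \<Longrightarrow> level (hd vs) \<le> m \<Longrightarrow> m \<le> level (last vs) \<Longrightarrow> \<exists>w\<in>set vs. level w = m"
proof (induction vs rule: induct_list012)
  case (3 u x vs)
  then have "level x = level u + 1" using unit_step_level unit_stepsD[OF E] by auto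
  then show ?case using 3 by (cases "m = level u") auto
qed auto

end

definition horizontal_edges :: "((nat \<times> nat) \<times> (nat \<times> nat)) set \<Rightarrow> ((nat \<times> nat) \<times> (nat \<times> nat)) set" where
  "horizontal_edges E = {(u, w) \<in> E. w = (fst u + 1, snd u)}"

definition vertical_edges :: "((nat \<times> nat) \<times> (nat \<times> nat)) set \<Rightarrow> ((nat \<times> nat) \<times> (nat \<times> nat)) set" where
  "vertical_edges E = {(u, w) \<in> E. w = (fst u, snd u + 1)}"

lemma unit_steps_split: "unit_steps E \<Longrightarrow> E = horizontal_edges E \<union> vertical_edges E"
  by (auto simp: horizontal_edges_def vertical_edges_def unit_steps_def unit_step_def)

lemma inj_on_snd_horizontal_edges: "inj_on snd (horizontal_edges E)"
  and inj_on_snd_vertical_edges: "inj_on snd (vertical_edges E)"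
  by (auto simp: inj_on_def horizontal_edges_def vertical_edges_def)

lemma horizontal_edges_subset: "horizontal_edges E \<subseteq> E"
  and vertical_edges_subset: "vertical_edges E \<subseteq> E"
  by (auto simp: horizontal_edges_def vertical_edges_def)

lemma card_unit_steps:
  assumes "finite E" "unit_steps E"
  shows "card E = card (snd ` horizontal_edges E) + card (snd ` vertical_edges E)"
proof -
  have "horizontal_edges E \<inter> vertical_edges E = {}" by (auto simp: horizontal_edges_def vertical_edges_def)
  moreover have "finite (horizontal_edges E)" "finite (vertical_edges E)"
    using finite_subset[OF horizontal_edges_subset assms(1)] finite_subset[OF vertical_edges_subset assms(1)] .
  ultimately have "card E = card (horizontal_edges E) + card (vertical_edges E)"
    using unit_steps_split[OF assms(2)] card_Un_disjoint by metis
  then show ?thesis using card_image inj_on_snd_horizontal_edges inj_on_snd_vertical_edges by metis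
qed

section \<open>Faces of the Gelfand--Tsetlin polytope\<close>

lemma sum_fun_apply: "(sum (f :: 'b \<Rightarrow> 'a \<Rightarrow> real) A) x = (\<Sum>a\<in>A. f a x)"
  by (induction A rule: infinite_finite_induct) auto

lemma scaleR_fun_apply [simp]: "(c *\<^sub>R (f :: 'a \<Rightarrow> real)) x = c * f x"
  by (simp add: scaleR_fun_def)

lemma mem_open_segment_extension:
  fixes y z :: "'a::real_vector"
  assumes e: "0 < e" and "z \<noteq> y"
  shows "z \<in> open_segment (z + e *\<^sub>R (z - y)) y"
proof -
  let ?u = "z + e *\<^sub>R (z - y)"
  have zu: "(1 + e) *\<^sub>R z = ?u + e *\<^sub>R y" by (simp add: algebra_simps)
  have "z = (1 / (1 + e)) *\<^sub>R ((1 + e) *\<^sub>R z)" using e by simp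
  also have "\<dots> = (1 / (1 + e)) *\<^sub>R ?u + (e / (1 + e)) *\<^sub>R y"
    unfolding zu by (simp add: scaleR_add_right)
  also have "1 / (1 + e) = 1 - e / (1 + e)" using e by (simp add: field_simps)
  finally have "z = (1 - e / (1 + e)) *\<^sub>R ?u + (e / (1 + e)) *\<^sub>R y" .
  moreover have "?u \<noteq> y"
  proof
    assume "?u = y"
    then have "(1 + e) *\<^sub>R (z - y) = 0" by (simp add: algebra_simps)
    then show False using e \<open>z \<noteq> y\<close> by simp
  qed
  moreover have "0 < e / (1 + e)" "e / (1 + e) < 1" using e by auto
  ultimately show ?thesis by (auto simp: in_segment)
qed

text \<open>\<open>IneqA i j\<close> is the defining inequality \<open>x\<^sub>i\<^sub>,\<^sub>j \<le> x\<^sub>i\<^sub>,\<^sub>j\<^sub>+\<^sub>1\<close> and \<open>IneqB i j\<close> is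
  \<open>x\<^sub>i\<^sub>+\<^sub>1\<^sub>,\<^sub>j \<le> x\<^sub>i\<^sub>,\<^sub>j\<close>; \<open>ineq_edge\<close> is the edge of \<open>Q\<^sup>+\<close> that \<open>phi\<close> attaches to it.\<close>

datatype gt_ineq = IneqA nat nat | IneqB nat nat

fun ineq_cell :: "gt_ineq \<Rightarrow> nat \<times> nat" where
  "ineq_cell (IneqA i j) = (i, j)"
| "ineq_cell (IneqB i j) = (i, j)"

fun ineq_edge :: "gt_ineq \<Rightarrow> (nat \<times> nat) \<times> (nat \<times> nat)" where
  "ineq_edge (IneqA i j) = ((i - 1, j), (i, j))"
| "ineq_edge (IneqB i j) = ((i, j - 1), (i, j))"

fun ineq_lo :: "(nat \<times> nat \<Rightarrow> real) \<Rightarrow> gt_ineq \<Rightarrow> real" where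
  "ineq_lo y (IneqA i j) = y (i, j)"
| "ineq_lo y (IneqB i j) = y (i + 1, j)"

fun ineq_hi :: "(nat \<times> nat \<Rightarrow> real) \<Rightarrow> gt_ineq \<Rightarrow> real" where
  "ineq_hi y (IneqA i j) = y (i, j + 1)"
| "ineq_hi y (IneqB i j) = y (i, j)"

lemma ineq_lo_add_scaleR [simp]: "ineq_lo (y + a *\<^sub>R z) c = ineq_lo y c + a * ineq_lo z c"
  and ineq_hi_add_scaleR [simp]: "ineq_hi (y + a *\<^sub>R z) c = ineq_hi y c + a * ineq_hi z c"
  by (cases c; simp)+

lemma GT_ext_add_scaleR: "GT_ext n lam (x + e *\<^sub>R w) = GT_ext n lam x + e *\<^sub>R GT_ext n (\<lambda>_. 0) w"
  and GT_ext_convex: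
    "GT_ext n lam ((1 - t) *\<^sub>R x + t *\<^sub>R y) = (1 - t) *\<^sub>R GT_ext n lam x + t *\<^sub>R GT_ext n lam y"
  by (auto simp: GT_ext_def fun_eq_iff algebra_simps)

locale gelfand_tsetlin =
  fixes n :: nat and lam :: "nat \<Rightarrow> real"
begin

abbreviation "I \<equiv> GT_index n"
abbreviation "P \<equiv> GT_polytope n lam"

abbreviation lo :: "(nat \<times> nat \<Rightarrow> real) \<Rightarrow> gt_ineq \<Rightarrow> real" where
  "lo x \<equiv> ineq_lo (GT_ext n lam x)"

abbreviation hi :: "(nat \<times> nat \<Rightarrow> real) \<Rightarrow> gt_ineq \<Rightarrow> real" where
  "hi x \<equiv> ineq_hi (GT_ext n lam x)"

text \<open>The linear part of the affine map \<open>GT_ext n lam\<close>.\<close>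
abbreviation lin :: "(nat \<times> nat \<Rightarrow> real) \<Rightarrow> nat \<times> nat \<Rightarrow> real" where
  "lin w \<equiv> GT_ext n (\<lambda>_. 0) w"

definition ineqs :: "gt_ineq set" where
  "ineqs = {c. ineq_cell c \<in> I}"

definition strict_ineqs :: "(nat \<times> nat \<Rightarrow> real) set \<Rightarrow> gt_ineq set" where
  "strict_ineqs F = {c \<in> ineqs. \<exists>x\<in>F. lo x c < hi x c}"

definition tight_face :: "gt_ineq set \<Rightarrow> (nat \<times> nat \<Rightarrow> real) set" where
  "tight_face S = {y \<in> P. \<forall>c \<in> ineqs - S. lo y c = hi y c}"

definition tangent :: "gt_ineq set \<Rightarrow> (nat \<times> nat \<Rightarrow> real) \<Rightarrow> bool" where
  "tangent S w \<longleftrightarrow> (\<forall>p. p \<notin> I \<longrightarrow> w p = 0) \<and> (\<forall>c \<in> ineqs - S. ineq_lo (lin w) c = ineq_hi (lin w) c)"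

lemma mem_GT_index: "(i, j) \<in> I \<longleftrightarrow> 1 \<le> i \<and> 1 \<le> j \<and> i + j \<le> n"
  by (simp add: GT_index_def)

lemma IneqA_mem_ineqs [simp]: "IneqA i j \<in> ineqs \<longleftrightarrow> (i, j) \<in> I"
  and IneqB_mem_ineqs [simp]: "IneqB i j \<in> ineqs \<longleftrightarrow> (i, j) \<in> I"
  by (simp_all add: ineqs_def)

lemma GT_ext_inner: "(i, j) \<in> I \<Longrightarrow> GT_ext n l x (i, j) = x (i, j)"
  by (simp add: GT_ext_def mem_GT_index)

lemma GT_ext_boundary: "i + j = n + 1 \<Longrightarrow> GT_ext n l x (i, j) = l i"
  by (simp add: GT_ext_def)

lemma finite_GT_index: "finite I"
  by (rule finite_subset[of _ "{0..n} \<times> {0..n}"]) (auto simp: GT_index_def)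

lemma finite_ineqs: "finite ineqs"
proof -
  have "ineqs \<subseteq> (\<lambda>(i, j). IneqA i j) ` I \<union> (\<lambda>(i, j). IneqB i j) ` I"
  proof
    fix c assume "c \<in> ineqs" then show "c \<in> (\<lambda>(i, j). IneqA i j) ` I \<union> (\<lambda>(i, j). IneqB i j) ` I"
      by (cases c) (force simp: ineqs_def)+
  qed
  then show ?thesis using finite_GT_index finite_subset by blast
qed

lemma mem_GT_polytope_iff: "x \<in> P \<longleftrightarrow> (\<forall>p. p \<notin> I \<longrightarrow> x p = 0) \<and> (\<forall>c\<in>ineqs. lo x c \<le> hi x c)"
proof -
  have "(\<forall>c\<in>ineqs. lo x c \<le> hi x c) \<longleftrightarrow> (\<forall>(i, j) \<in> I.
          GT_ext n lam x (i, j + 1) \<ge> GT_ext n lam x (i, j) \<and> GT_ext n lam x (i, j) \<ge> GT_ext n lam x (i + 1, j))"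
  proof
    assume "\<forall>c\<in>ineqs. lo x c \<le> hi x c"
    then show "\<forall>(i, j) \<in> I. GT_ext n lam x (i, j + 1) \<ge> GT_ext n lam x (i, j) \<and>
                 GT_ext n lam x (i, j) \<ge> GT_ext n lam x (i + 1, j)"
      by (metis (no_types, lifting) IneqA_mem_ineqs IneqB_mem_ineqs case_prodI2 ineq_hi.simps ineq_lo.simps)
  next
    assume "\<forall>(i, j) \<in> I. GT_ext n lam x (i, j + 1) \<ge> GT_ext n lam x (i, j) \<and>
              GT_ext n lam x (i, j) \<ge> GT_ext n lam x (i + 1, j)"
    then show "\<forall>c\<in>ineqs. lo x c \<le> hi x c" by (auto simp: ineqs_def elim!: ineq_cell.elims)
  qed
  then show ?thesis by (simp add: GT_polytope_def)
qed

lemma lo_le_hi: "x \<in> P \<Longrightarrow> c \<in> ineqs \<Longrightarrow> lo x c \<le> hi x c"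
  by (simp add: mem_GT_polytope_iff)

lemma lo_convex: "lo ((1 - t) *\<^sub>R x + t *\<^sub>R y) c = (1 - t) * lo x c + t * lo y c"
  and hi_convex: "hi ((1 - t) *\<^sub>R x + t *\<^sub>R y) c = (1 - t) * hi x c + t * hi y c"
  unfolding GT_ext_convex by (cases c; simp)+

lemma lo_add_scaleR: "lo (x + e *\<^sub>R w) c = lo x c + e * ineq_lo (lin w) c"
  and hi_add_scaleR: "hi (x + e *\<^sub>R w) c = hi x c + e * ineq_hi (lin w) c"
  by (simp_all add: GT_ext_add_scaleR)

lemma lo_diff: "lo y c - lo x c = ineq_lo (lin (y - x)) c"
  and hi_diff: "hi y c - hi x c = ineq_hi (lin (y - x)) c"
  by (cases c; simp add: GT_ext_def)+

lemma tight_face_face_of: "tight_face S face_of P"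
proof (unfold face_of_def, intro conjI ballI impI)
  show "tight_face S \<subseteq> P" by (auto simp: tight_face_def)
  show "convex (tight_face S)"
  proof (rule convexI)
    fix x y and a b :: real
    assume xy: "x \<in> tight_face S" "y \<in> tight_face S" and ab: "0 \<le> a" "0 \<le> b" "a + b = 1"
    then have a: "a = 1 - b" by simp
    have "lo x c \<le> hi x c" "lo y c \<le> hi y c" if "c \<in> ineqs" for c
      using xy that by (auto simp: tight_face_def mem_GT_polytope_iff)
    then have "\<forall>c\<in>ineqs. lo ((1 - b) *\<^sub>R x + b *\<^sub>R y) c \<le> hi ((1 - b) *\<^sub>R x + b *\<^sub>R y) c"
      unfolding lo_convex hi_convex using ab by (smt (verit) mult_left_mono)
    then show "a *\<^sub>R x + b *\<^sub>R y \<in> tight_face S"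
      using xy unfolding a by (simp add: tight_face_def mem_GT_polytope_iff lo_convex hi_convex)
  qed
  fix a b x assume ab: "a \<in> P" "b \<in> P" and x: "x \<in> tight_face S" and seg: "x \<in> open_segment a b"
  obtain u where u: "0 < u" "u < 1" "x = (1 - u) *\<^sub>R a + u *\<^sub>R b"
    using seg by (auto simp: in_segment)
  have "lo a c = hi a c \<and> lo b c = hi b c" if c: "c \<in> ineqs - S" for c
  proof -
    have "lo a c \<le> hi a c" "lo b c \<le> hi b c" using ab c by (auto simp: lo_le_hi)
    moreover have "(1 - u) * lo a c + u * lo b c = (1 - u) * hi a c + u * hi b c"
      using x c u by (simp add: tight_face_def lo_convex hi_convex)
    ultimately show ?thesis using u by (smt (verit, best) mult_less_cancel_left_pos mult_left_mono)
  qed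
  then show "a \<in> tight_face S" "b \<in> tight_face S" using ab by (auto simp: tight_face_def)
qed

text \<open>Average the witnesses of the finitely many strict inequalities.\<close>
lemma face_strict_point:
  assumes F: "F face_of P" "F \<noteq> {}"
  shows "\<exists>z\<in>F. \<forall>c\<in>strict_ineqs F. lo z c < hi z c"
proof -
  have "finite (strict_ineqs F)"
    using finite_ineqs finite_subset by (auto simp: strict_ineqs_def)
  moreover have "\<exists>z\<in>F. \<forall>c\<in>A. lo z c < hi z c" if "finite A" "A \<subseteq> strict_ineqs F" for A
    using that
  proof (induction A rule: finite_induct)
    case empty then show ?case using F by auto
  next
    case (insert c A)
    then obtain z where z: "z \<in> F" "\<forall>c\<in>A. lo z c < hi z c" by auto
    obtain y where y: "y \<in> F" "lo y c < hi y c" using insert by (auto simp: strict_ineqs_def)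
    define m where "m = (1 - 1/2) *\<^sub>R z + (1/2 :: real) *\<^sub>R y"
    have "m \<in> F" unfolding m_def using face_of_imp_convex[OF F(1)] z(1) y(1) by (rule convexD) auto
    moreover have "lo m d < hi m d" if d: "d \<in> insert c A" for d
    proof -
      have "d \<in> ineqs" using d insert by (auto simp: strict_ineqs_def)
      then have "lo z d \<le> hi z d" "lo y d \<le> hi y d"
        using z(1) y(1) face_of_imp_subset[OF F(1)] lo_le_hi by blast+
      moreover have "lo z d < hi z d \<or> lo y d < hi y d" using d z y by auto
      moreover have "lo m d = (lo z d + lo y d) / 2" "hi m d = (hi z d + hi y d) / 2"
        unfolding m_def lo_convex hi_convex by simp_all
      ultimately show ?thesis by auto
    qed
    ultimately show ?case by blast
  qed
  ultimately show ?thesis by blast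
qed

lemma tight_face_perturb:
  assumes S: "S \<subseteq> ineqs" and z: "z \<in> P" "\<forall>c\<in>S. lo z c < hi z c" "\<forall>c\<in>ineqs - S. lo z c = hi z c"
    and w: "tangent S w"
  shows "\<exists>e>0. z + e *\<^sub>R w \<in> tight_face S"
proof -
  let ?slack = "\<lambda>c e. (hi z c - lo z c) + e * (ineq_hi (lin w) c - ineq_lo (lin w) c)"
  have "finite S" using finite_ineqs S finite_subset by blast
  moreover have "\<forall>c\<in>S. eventually (\<lambda>e. 0 < ?slack c e) (at_right (0::real))"
  proof
    fix c assume "c \<in> S"
    moreover have "(?slack c \<longlongrightarrow> ?slack c 0) (at_right 0)" by (intro tendsto_intros)
    ultimately show "eventually (\<lambda>e. 0 < ?slack c e) (at_right (0::real))"
      using z by (intro order_tendstoD(1)) auto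
  qed
  ultimately have "eventually (\<lambda>e. \<forall>c\<in>S. 0 < ?slack c e) (at_right (0::real))"
    by (rule eventually_ball_finite)
  then obtain b where b: "b > 0" "\<And>e. 0 < e \<Longrightarrow> e < b \<Longrightarrow> \<forall>c\<in>S. 0 < ?slack c e"
    by (auto simp: eventually_at_right_field)
  have "z + (b/2) *\<^sub>R w \<in> tight_face S"
    unfolding tight_face_def mem_GT_polytope_iff
  proof (intro CollectI conjI ballI allI impI)
    fix p assume "p \<notin> I" then show "(z + (b/2) *\<^sub>R w) p = 0"
      using z w by (cases p) (simp add: mem_GT_polytope_iff tangent_def)
  next
    fix c assume c: "c \<in> ineqs"
    show "lo (z + (b/2) *\<^sub>R w) c \<le> hi (z + (b/2) *\<^sub>R w) c"
    proof (cases "c \<in> S")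
      case True
      then show ?thesis using b(2)[of "b/2"] b(1)
        unfolding lo_add_scaleR hi_add_scaleR right_diff_distrib by force
    next
      case False
      then show ?thesis using c z w by (simp add: lo_add_scaleR hi_add_scaleR tangent_def)
    qed
  next
    fix c assume "c \<in> ineqs - S"
    then show "lo (z + (b/2) *\<^sub>R w) c = hi (z + (b/2) *\<^sub>R w) c"
      using z w by (simp add: lo_add_scaleR hi_add_scaleR tangent_def)
  qed
  then show ?thesis using b by (intro exI[of _ "b/2"]) auto
qed

lemma strict_ineqs_subset: "strict_ineqs F \<subseteq> ineqs"
  by (auto simp: strict_ineqs_def)

lemma tight_outside_strict_ineqs:
  "F \<subseteq> P \<Longrightarrow> x \<in> F \<Longrightarrow> c \<in> ineqs - strict_ineqs F \<Longrightarrow> lo x c = hi x c"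
  using lo_le_hi by (fastforce simp: strict_ineqs_def)

lemma tangent_diff: "x \<in> tight_face S \<Longrightarrow> y \<in> tight_face S \<Longrightarrow> tangent S (y - x)"
  by (auto simp: tangent_def tight_face_def mem_GT_polytope_iff simp flip: lo_diff hi_diff)

text \<open>For \<open>\<supseteq>\<close>: push a point \<open>z\<close> strict on \<open>strict_ineqs F\<close> slightly beyond itself, away
  from \<open>y\<close>; then \<open>z\<close> lies in an open segment ending at \<open>y\<close>, so \<open>y\<close> belongs to the face.\<close>
lemma face_eq_tight_face:
  assumes F: "F face_of P" "F \<noteq> {}"
  shows "F = tight_face (strict_ineqs F)"
proof
  have FP: "F \<subseteq> P" using F face_of_imp_subset by blast
  then show "F \<subseteq> tight_face (strict_ineqs F)"
    using tight_outside_strict_ineqs by (auto simp: tight_face_def)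
  show "tight_face (strict_ineqs F) \<subseteq> F"
  proof
    fix y assume y: "y \<in> tight_face (strict_ineqs F)"
    obtain z where z: "z \<in> F" "\<forall>c\<in>strict_ineqs F. lo z c < hi z c" using face_strict_point[OF F] by blast
    have z_tight: "z \<in> tight_face (strict_ineqs F)"
      using z FP tight_outside_strict_ineqs by (auto simp: tight_face_def)
    then obtain e where e: "e > 0" "z + e *\<^sub>R (z - y) \<in> tight_face (strict_ineqs F)"
      using tight_face_perturb[OF strict_ineqs_subset _ z(2) _ tangent_diff[OF y z_tight]]
      by (auto simp: tight_face_def)
    show "y \<in> F"
    proof (cases "z = y")
      case True then show ?thesis using z by simp
    next
      case False
      then have "z \<in> open_segment (z + e *\<^sub>R (z - y)) y" using mem_open_segment_extension e(1) by blast
      moreover have "z + e *\<^sub>R (z - y) \<in> P" "y \<in> P" using e y by (auto simp: tight_face_def)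
      ultimately show "y \<in> F" using F(1) z(1) unfolding face_of_def by blast
    qed
  qed
qed

text \<open>\<open>tight_face (strict_ineqs {x})\<close> is the smallest face containing \<open>x\<close>.\<close>

lemma mem_tight_face_strict_ineqs_point: "x \<in> P \<Longrightarrow> x \<in> tight_face (strict_ineqs {x})"
  using tight_outside_strict_ineqs[of "{x}" x] by (auto simp: tight_face_def)

lemma strict_ineqs_tight_face_point:
  assumes x: "x \<in> P"
  shows "strict_ineqs (tight_face (strict_ineqs {x})) = strict_ineqs {x}"
proof
  show "strict_ineqs (tight_face (strict_ineqs {x})) \<subseteq> strict_ineqs {x}"
  proof
    fix c assume "c \<in> strict_ineqs (tight_face (strict_ineqs {x}))"
    then obtain y where c: "c \<in> ineqs" "lo y c < hi y c" and "y \<in> tight_face (strict_ineqs {x})"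
      by (auto simp: strict_ineqs_def)
    then have "c \<in> ineqs - strict_ineqs {x} \<Longrightarrow> lo y c = hi y c" by (simp add: tight_face_def)
    then show "c \<in> strict_ineqs {x}" using c by auto
  qed
  show "strict_ineqs {x} \<subseteq> strict_ineqs (tight_face (strict_ineqs {x}))"
    using mem_tight_face_strict_ineqs_point[OF x] by (auto simp: strict_ineqs_def)
qed

end

section \<open>The edges of \<open>phi F\<close>\<close>

lemma Field_eq_endpoints: "Field E = {u. \<exists>v. (u, v) \<in> E} \<union> {v. \<exists>u. (u, v) \<in> E}"
  by (auto simp: Field_def)

context gelfand_tsetlin
begin

definition axis_edges :: "((nat \<times> nat) \<times> (nat \<times> nat)) set" where
  "axis_edges = {((0, i), (0, i + 1)) | i. i \<le> n - 1} \<union> {((i, 0), (i + 1, 0)) | i. i \<le> n - 1}"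

definition face_edges :: "(nat \<times> nat \<Rightarrow> real) set \<Rightarrow> ((nat \<times> nat) \<times> (nat \<times> nat)) set" where
  "face_edges F = axis_edges \<union> ineq_edge ` strict_ineqs F"

lemma phi_eq_face_edges: "phi n lam F = (Field (face_edges F), face_edges F)"
proof -
  have A: "{((i - 1, j), (i, j)) | i j. (i, j) \<in> I \<and>
                   (\<exists>x\<in>F. GT_ext n lam x (i, j) < GT_ext n lam x (i, j + 1))}
         \<union> {((i, j - 1), (i, j)) | i j. (i, j) \<in> I \<and>
                   (\<exists>x\<in>F. GT_ext n lam x (i, j) > GT_ext n lam x (i + 1, j))}
         = ineq_edge ` strict_ineqs F" (is "?L = ?R")
  proof
    show "?R \<subseteq> ?L"
    proof
      fix e assume "e \<in> ?R"
      then obtain c where "c \<in> strict_ineqs F" "e = ineq_edge c" by blast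
      then show "e \<in> ?L" by (cases c) (auto simp: strict_ineqs_def)
    qed
    show "?L \<subseteq> ?R"
    proof
      fix e assume "e \<in> ?L"
      then have "(\<exists>i j. e = ineq_edge (IneqA i j) \<and> IneqA i j \<in> strict_ineqs F) \<or>
                 (\<exists>i j. e = ineq_edge (IneqB i j) \<and> IneqB i j \<in> strict_ineqs F)"
        by (auto simp: strict_ineqs_def)
      then show "e \<in> ?R" by blast
    qed
  qed
  show ?thesis
    unfolding phi_def Let_def Field_eq_endpoints face_edges_def axis_edges_def A[symmetric]
    by (simp only: Un_assoc)
qed

lemma ineq_edge_inj: "c \<in> ineqs \<Longrightarrow> d \<in> ineqs \<Longrightarrow> ineq_edge c = ineq_edge d \<Longrightarrow> c = d"
  by (cases c; cases d) (auto simp: mem_GT_index)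

lemma ineq_edge_notin_axis_edges: "c \<in> ineqs \<Longrightarrow> ineq_edge c \<notin> axis_edges"
  by (cases c) (auto simp: mem_GT_index axis_edges_def)

lemma face_edges_subset_iff: "face_edges F \<subseteq> face_edges G \<longleftrightarrow> strict_ineqs F \<subseteq> strict_ineqs G"
proof
  assume FG: "face_edges F \<subseteq> face_edges G"
  show "strict_ineqs F \<subseteq> strict_ineqs G"
  proof
    fix c assume c: "c \<in> strict_ineqs F"
    then have "ineq_edge c \<in> face_edges G" using FG by (auto simp: face_edges_def)
    moreover have "c \<in> ineqs" using c strict_ineqs_subset by blast
    ultimately obtain d where "d \<in> strict_ineqs G" "ineq_edge c = ineq_edge d"
      using ineq_edge_notin_axis_edges by (auto simp: face_edges_def)
    then show "c \<in> strict_ineqs G" using ineq_edge_inj \<open>c \<in> ineqs\<close> strict_ineqs_subset by blast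
  qed
qed (auto simp: face_edges_def)

lemma face_subset_iff_subgraph_le:
  assumes "F face_of P" "F \<noteq> {}" "G face_of P" "G \<noteq> {}"
  shows "F \<subseteq> G \<longleftrightarrow> subgraph_le (phi n lam F) (phi n lam G)"
proof -
  have "subgraph_le (phi n lam F) (phi n lam G) \<longleftrightarrow> face_edges F \<subseteq> face_edges G"
    using mono_Field[of "face_edges F" "face_edges G"] by (auto simp: subgraph_le_def phi_eq_face_edges)
  also have "\<dots> \<longleftrightarrow> strict_ineqs F \<subseteq> strict_ineqs G" by (rule face_edges_subset_iff)
  also have "\<dots> \<longleftrightarrow> F \<subseteq> G"
  proof
    assume "strict_ineqs F \<subseteq> strict_ineqs G"
    then have "tight_face (strict_ineqs F) \<subseteq> tight_face (strict_ineqs G)"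
      by (auto simp: tight_face_def)
    then show "F \<subseteq> G" using face_eq_tight_face assms by blast
  qed (auto simp: strict_ineqs_def)
  finally show ?thesis by simp
qed

end

section \<open>The dimension of a face\<close>

text \<open>A direction tangent to \<open>S\<close> takes the same
  value at a cell and at its anchor, and vanishes where there is none.\<close>

function anchor :: "nat \<Rightarrow> gt_ineq set \<Rightarrow> nat \<times> nat \<Rightarrow> (nat \<times> nat) option" where
  "anchor n S (i, j) = (if \<not> (1 \<le> i \<and> 1 \<le> j \<and> i + j \<le> n) then None
     else if IneqA i j \<notin> S then anchor n S (i, j + 1)
     else if IneqB i j \<notin> S then anchor n S (i + 1, j)
     else Some (i, j))"
  by pat_completeness auto
termination by (relation "Wellfounded.measure (\<lambda>(n, S, (i, j)). n + 1 - (i + j))") auto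

declare anchor.simps [simp del]

lemma anchor_SomeD:
  "anchor n S c = Some d \<Longrightarrow> (1 \<le> fst d \<and> 1 \<le> snd d \<and> fst d + snd d \<le> n) \<and> IneqA (fst d) (snd d) \<in> S \<and> IneqB (fst d) (snd d) \<in> S"
proof (induction n S c rule: anchor.induct)
  case (1 n S i j)
  then show ?case by (subst (asm) anchor.simps) (auto split: if_splits)
qed

lemma anchor_outside: "\<not> (1 \<le> i \<and> 1 \<le> j \<and> i + j \<le> n) \<Longrightarrow> anchor n S (i, j) = None"
  and anchor_self: "1 \<le> i \<Longrightarrow> 1 \<le> j \<Longrightarrow> i + j \<le> n \<Longrightarrow> IneqA i j \<in> S \<Longrightarrow> IneqB i j \<in> S \<Longrightarrow>
    anchor n S (i, j) = Some (i, j)"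
  and anchor_IneqA: "1 \<le> i \<Longrightarrow> 1 \<le> j \<Longrightarrow> i + j \<le> n \<Longrightarrow> IneqA i j \<notin> S \<Longrightarrow>
    anchor n S (i, j) = anchor n S (i, j + 1)"
  and anchor_IneqB: "1 \<le> i \<Longrightarrow> 1 \<le> j \<Longrightarrow> i + j \<le> n \<Longrightarrow> IneqA i j \<in> S \<Longrightarrow> IneqB i j \<notin> S \<Longrightarrow>
    anchor n S (i, j) = anchor n S (i + 1, j)"
  by (simp_all add: anchor.simps[of n S i j])

context gelfand_tsetlin
begin

definition corner_cells :: "(nat \<times> nat \<Rightarrow> real) set \<Rightarrow> (nat \<times> nat) set" where
  "corner_cells F = {(i, j) \<in> I. IneqA i j \<in> strict_ineqs F \<and> IneqB i j \<in> strict_ineqs F}"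

definition anchor_indicator :: "gt_ineq set \<Rightarrow> nat \<times> nat \<Rightarrow> nat \<times> nat \<Rightarrow> real" where
  "anchor_indicator S d = (\<lambda>c. if anchor n S c = Some d then 1 else 0)"

lemma finite_corner_cells: "finite (corner_cells F)"
  using finite_GT_index by (rule finite_subset[rotated]) (auto simp: corner_cells_def)

lemma anchor_Some_GT_index: "anchor n S c = Some d \<Longrightarrow> c \<in> I"
  using anchor_outside[of "fst c" "snd c" n S] by (cases c) (auto simp: mem_GT_index)

lemma anchor_Some_corner_cells: "anchor n (strict_ineqs F) c = Some d \<Longrightarrow> d \<in> corner_cells F"
  using anchor_SomeD[of n "strict_ineqs F" c d] by (cases d) (auto simp: corner_cells_def mem_GT_index)

lemma anchor_corner_cell: "d \<in> corner_cells F \<Longrightarrow> anchor n (strict_ineqs F) d = Some d"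
  using anchor_self by (cases d) (auto simp: corner_cells_def mem_GT_index)

text \<open>Interlacing squeezes \<open>x\<^sub>i\<^sub>+\<^sub>1\<^sub>,\<^sub>j\<^sub>+\<^sub>1\<close> between \<open>x\<^sub>i\<^sub>+\<^sub>1\<^sub>,\<^sub>j\<close> and \<open>x\<^sub>i\<^sub>,\<^sub>j\<^sub>+\<^sub>1\<close>, which agree when both
  inequalities at \<open>(i, j)\<close> are tight.\<close>
lemma tight_square:
  assumes FP: "F \<subseteq> P" and ij: "1 \<le> i" "1 \<le> j" "i + j < n"
    and A: "IneqA i j \<notin> strict_ineqs F" and B: "IneqB i j \<notin> strict_ineqs F"
  shows "IneqA (i + 1) j \<notin> strict_ineqs F \<and> IneqB i (j + 1) \<notin> strict_ineqs F"
proof -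
  have I: "(i, j) \<in> I" "(i + 1, j) \<in> I" "(i, j + 1) \<in> I" using ij by (auto simp: mem_GT_index)
  have "lo x (IneqA (i + 1) j) = hi x (IneqA (i + 1) j) \<and> lo x (IneqB i (j + 1)) = hi x (IneqB i (j + 1))"
    if x: "x \<in> F" for x
  proof -
    have "lo x (IneqA i j) = hi x (IneqA i j)" "lo x (IneqB i j) = hi x (IneqB i j)"
      using tight_outside_strict_ineqs[OF FP x, of "IneqA i j"] tight_outside_strict_ineqs[OF FP x, of "IneqB i j"]
        A B I by auto
    moreover have "lo x (IneqA (i + 1) j) \<le> hi x (IneqA (i + 1) j)" "lo x (IneqB i (j + 1)) \<le> hi x (IneqB i (j + 1))"
      using lo_le_hi[of x "IneqA (i + 1) j"] lo_le_hi[of x "IneqB i (j + 1)"] x FP I by auto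
    ultimately show ?thesis by simp
  qed
  then show ?thesis by (auto simp: strict_ineqs_def)
qed

lemma anchor_tight_step:
  assumes FP: "F \<subseteq> P"
  shows "1 \<le> i \<Longrightarrow> 1 \<le> j \<Longrightarrow> i + j \<le> n \<Longrightarrow>
   (IneqA i j \<notin> strict_ineqs F \<longrightarrow> anchor n (strict_ineqs F) (i, j) = anchor n (strict_ineqs F) (i, j + 1)) \<and>
   (IneqB i j \<notin> strict_ineqs F \<longrightarrow> anchor n (strict_ineqs F) (i, j) = anchor n (strict_ineqs F) (i + 1, j))"
proof (induction "n - (i + j)" arbitrary: i j rule: less_induct)
  case less
  let ?S = "strict_ineqs F"
  show ?case
  proof (intro conjI impI)
    assume "IneqA i j \<notin> ?S"
    then show "anchor n ?S (i, j) = anchor n ?S (i, j + 1)" using anchor_IneqA less by blast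
  next
    assume B: "IneqB i j \<notin> ?S"
    show "anchor n ?S (i, j) = anchor n ?S (i + 1, j)"
    proof (cases "IneqA i j \<in> ?S")
      case True then show ?thesis using anchor_IneqB less B by blast
    next
      case A: False
      then have "anchor n ?S (i, j) = anchor n ?S (i, j + 1)" using anchor_IneqA less by blast
      moreover have "anchor n ?S (i, j + 1) = anchor n ?S (i + 1, j)"
      proof (cases "i + j < n")
        case False then show ?thesis by (simp add: anchor_outside)
      next
        case True
        have "IneqA (i + 1) j \<notin> ?S" "IneqB i (j + 1) \<notin> ?S"
          using tight_square[OF FP less(2,3) True A B] by auto
        then show ?thesis
          using less(1)[of i "j + 1"] anchor_IneqA[of "i + 1" j n ?S] True less(2,3) by simp
      qed
      ultimately show ?thesis by simp
    qed
  qed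
qed

lemma lin_anchor_indicator: "lin (anchor_indicator S d) = anchor_indicator S d"
proof
  fix c :: "nat \<times> nat"
  show "lin (anchor_indicator S d) c = anchor_indicator S d c"
  proof (cases "c \<in> I")
    case False
    then show ?thesis using anchor_Some_GT_index[of S c d]
      by (cases c) (auto simp: GT_ext_def anchor_indicator_def)
  next
    case True then show ?thesis by (cases c) (simp add: GT_ext_inner)
  qed
qed

lemma tangent_anchor_indicator:
  assumes FP: "F \<subseteq> P"
  shows "tangent (strict_ineqs F) (anchor_indicator (strict_ineqs F) d)"
  unfolding tangent_def lin_anchor_indicator
proof (intro conjI allI impI ballI)
  fix p assume "p \<notin> I" then show "anchor_indicator (strict_ineqs F) d p = 0"
    using anchor_Some_GT_index[of "strict_ineqs F" p d] by (auto simp: anchor_indicator_def)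
next
  fix c assume c: "c \<in> ineqs - strict_ineqs F"
  then show "ineq_lo (anchor_indicator (strict_ineqs F) d) c = ineq_hi (anchor_indicator (strict_ineqs F) d) c"
    using anchor_tight_step[OF FP] by (cases c) (auto simp: mem_GT_index anchor_indicator_def)
qed

lemma tangent_eq_at_anchor:
  assumes w: "tangent S w"
  shows "1 \<le> i \<Longrightarrow> 1 \<le> j \<Longrightarrow> i + j \<le> n + 1 \<Longrightarrow>
    lin w (i, j) = (case anchor n S (i, j) of None \<Rightarrow> 0 | Some d \<Rightarrow> w d)"
proof (induction "n + 1 - (i + j)" arbitrary: i j rule: less_induct)
  case less
  show ?case
  proof (cases "i + j \<le> n")
    case False
    then have "i + j = n + 1" using less by simp
    then show ?thesis using anchor_outside[of i j n] by (simp add: GT_ext_boundary)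
  next
    case inI: True
    then have ij: "(i, j) \<in> I" using less by (simp add: mem_GT_index)
    show ?thesis
    proof (cases "IneqA i j \<in> S")
      case False
      then have "lin w (i, j) = lin w (i, j + 1)" using w ij by (force simp: tangent_def)
      then show ?thesis using less(1)[of i "j + 1"] less(2,3) inI anchor_IneqA False by simp
    next
      case A: True
      show ?thesis
      proof (cases "IneqB i j \<in> S")
        case False
        then have "lin w (i, j) = lin w (i + 1, j)" using w ij by (force simp: tangent_def)
        then show ?thesis using less(1)[of "i + 1" j] less(2,3) inI anchor_IneqB A False by simp
      next
        case True
        then show ?thesis using anchor_self less inI A by (simp add: GT_ext_inner ij)
      qed
    qed
  qed
qed

lemma tangent_eq_sum_anchor_indicator:
  assumes w: "tangent (strict_ineqs F) w"
  shows "w = (\<Sum>d\<in>corner_cells F. w d *\<^sub>R anchor_indicator (strict_ineqs F) d)"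
proof
  fix c :: "nat \<times> nat"
  let ?a = "anchor n (strict_ineqs F) c"
  have "(\<Sum>d\<in>corner_cells F. w d *\<^sub>R anchor_indicator (strict_ineqs F) d) c
      = (\<Sum>d\<in>corner_cells F. if ?a = Some d then w d else 0)"
    by (auto simp: sum_fun_apply anchor_indicator_def intro!: sum.cong)
  also have "\<dots> = (case ?a of None \<Rightarrow> 0 | Some d \<Rightarrow> w d)"
    using anchor_Some_corner_cells finite_corner_cells by (cases ?a) auto
  also have "\<dots> = w c"
  proof (cases "c \<in> I")
    case False
    then show ?thesis using w anchor_Some_GT_index[of _ c] by (cases ?a; cases c) (auto simp: tangent_def)
  next
    case True
    then show ?thesis using tangent_eq_at_anchor[OF w, of "fst c" "snd c"]
      by (cases c) (simp add: mem_GT_index GT_ext_inner)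
  qed
  finally show "w c = (\<Sum>d\<in>corner_cells F. w d *\<^sub>R anchor_indicator (strict_ineqs F) d) c" ..
qed

lemma anchor_indicator_inj: "inj_on (anchor_indicator (strict_ineqs F)) (corner_cells F)"
proof (rule inj_onI)
  fix d d' assume d: "d \<in> corner_cells F" "d' \<in> corner_cells F"
    and eq: "anchor_indicator (strict_ineqs F) d = anchor_indicator (strict_ineqs F) d'"
  have "anchor_indicator (strict_ineqs F) d d = 1"
    using anchor_corner_cell[OF d(1)] by (simp add: anchor_indicator_def)
  then have "anchor_indicator (strict_ineqs F) d' d = 1" using eq by simp
  then show "d = d'" using anchor_corner_cell[OF d(1)] by (simp add: anchor_indicator_def split: if_splits)
qed

lemma independent_anchor_indicators: "independent (anchor_indicator (strict_ineqs F) ` corner_cells F)"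
proof (rule independent_if_scalars_zero)
  let ?e = "anchor_indicator (strict_ineqs F)"
  show "finite (?e ` corner_cells F)" using finite_corner_cells by simp
  fix f x assume s: "(\<Sum>x\<in>?e ` corner_cells F. f x *\<^sub>R x) = 0" and x: "x \<in> ?e ` corner_cells F"
  then obtain d where d: "d \<in> corner_cells F" "x = ?e d" by blast
  have "0 = (\<Sum>x\<in>?e ` corner_cells F. f x *\<^sub>R x) d" using s by simp
  also have "\<dots> = (\<Sum>d'\<in>corner_cells F. f (?e d') * ?e d' d)"
    using sum.reindex[OF anchor_indicator_inj] by (simp add: sum_fun_apply)
  also have "\<dots> = (\<Sum>d'\<in>corner_cells F. if d' = d then f (?e d') else 0)"
    using anchor_corner_cell[OF d(1)] by (intro sum.cong) (auto simp: anchor_indicator_def)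
  also have "\<dots> = f x" using d finite_corner_cells by simp
  finally show "f x = 0" ..
qed

lemma affine_dim_face_eq_card_corner_cells:
  assumes F: "F face_of P" "F \<noteq> {}"
  shows "affine_dim F = card (corner_cells F)"
proof -
  let ?e = "anchor_indicator (strict_ineqs F)"
  let ?D = "{y - x | x y. x \<in> F \<and> y \<in> F}"
  have FP: "F \<subseteq> P" using F(1) face_of_imp_subset by blast
  have F_eq: "F = tight_face (strict_ineqs F)" using face_eq_tight_face[OF F] .
  have "?e d \<in> span ?D" for d
  proof -
    obtain z where z: "z \<in> F" "\<forall>c\<in>strict_ineqs F. lo z c < hi z c" using face_strict_point[OF F] by blast
    then obtain e where e: "e > 0" "z + e *\<^sub>R ?e d \<in> F"
      using tight_face_perturb[OF strict_ineqs_subset _ z(2) _ tangent_anchor_indicator[OF FP]] FP F_eq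
      by (metis (no_types, lifting) DiffD1 subsetD tight_outside_strict_ineqs)
    then have "e *\<^sub>R ?e d \<in> ?D" using z(1) by force
    then have "(1 / e) *\<^sub>R (e *\<^sub>R ?e d) \<in> span ?D" by (intro span_scale span_base)
    then show ?thesis using e by simp
  qed
  moreover have "\<delta> \<in> span (?e ` corner_cells F)" if "\<delta> \<in> ?D" for \<delta>
  proof -
    have "tangent (strict_ineqs F) \<delta>" using that tangent_diff F_eq by auto
    then have "\<delta> = (\<Sum>d\<in>corner_cells F. \<delta> d *\<^sub>R ?e d)" by (rule tangent_eq_sum_anchor_indicator)
    also have "\<dots> \<in> span (?e ` corner_cells F)" by (intro span_sum span_scale span_base) auto
    finally show ?thesis .
  qed
  ultimately have "span (?e ` corner_cells F) = span ?D" unfolding span_eq by blast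
  then have "dim ?D = card (?e ` corner_cells F)" using dim_eq_card independent_anchor_indicators by blast
  also have "\<dots> = card (corner_cells F)" using card_image[OF anchor_indicator_inj] .
  finally show ?thesis by (simp add: affine_dim_def)
qed

end

section \<open>Positive paths through \<open>phi F\<close>\<close>

context gelfand_tsetlin
begin

lemma unit_steps_face_edges: "unit_steps (face_edges F)"
proof -
  have "unit_step u w" if uw: "(u, w) \<in> ineq_edge ` strict_ineqs F" for u w
  proof -
    obtain c where "c \<in> strict_ineqs F" "(u, w) = ineq_edge c" using uw by blast
    moreover have "strict_ineqs F \<subseteq> ineqs" by (rule strict_ineqs_subset)
    ultimately show ?thesis by (cases c) (auto simp: unit_step_def mem_GT_index)
  qed
  moreover have "unit_step u w" if "(u, w) \<in> axis_edges" for u w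
    using that by (auto simp: axis_edges_def unit_step_def)
  ultimately show ?thesis unfolding unit_steps_def face_edges_def by blast
qed

lemma mem_axis_edges:
  "((0, i), (0, i + 1)) \<in> axis_edges \<longleftrightarrow> i \<le> n - 1"
  "((i, 0), (i + 1, 0)) \<in> axis_edges \<longleftrightarrow> i \<le> n - 1"
  by (auto simp: axis_edges_def)

lemma ineq_edge_into_iff: "1 \<le> a \<Longrightarrow> 1 \<le> b \<Longrightarrow>
    (w, (a, b)) = ineq_edge c \<longleftrightarrow> c = IneqA a b \<and> w = (a - 1, b) \<or> c = IneqB a b \<and> w = (a, b - 1)"
  and ineq_edge_from_iff: "1 \<le> a \<Longrightarrow> 1 \<le> b \<Longrightarrow>
    ((a, b), w) = ineq_edge c \<longleftrightarrow> c = IneqA (a + 1) b \<and> w = (a + 1, b) \<or> c = IneqB a (b + 1) \<and> w = (a, b + 1)"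
  by (cases c; auto)+

lemma axis_edge_not_into_inner: "1 \<le> a \<Longrightarrow> 1 \<le> b \<Longrightarrow> (w, (a, b)) \<notin> axis_edges"
  and axis_edge_not_from_inner: "1 \<le> a \<Longrightarrow> 1 \<le> b \<Longrightarrow> ((a, b), w) \<notin> axis_edges"
  by (auto simp: axis_edges_def)

lemma in_edge_iff:
  assumes "1 \<le> a" "1 \<le> b"
  shows "(w, (a, b)) \<in> face_edges F \<longleftrightarrow>
     w = (a - 1, b) \<and> IneqA a b \<in> strict_ineqs F \<or> w = (a, b - 1) \<and> IneqB a b \<in> strict_ineqs F"
proof -
  have "(w, (a, b)) \<in> face_edges F \<longleftrightarrow> (\<exists>c\<in>strict_ineqs F. (w, (a, b)) = ineq_edge c)"
    using axis_edge_not_into_inner[OF assms] by (simp add: face_edges_def image_iff)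
  then show ?thesis unfolding ineq_edge_into_iff[OF assms] by blast
qed

lemma out_edge_iff:
  assumes "1 \<le> a" "1 \<le> b"
  shows "((a, b), w) \<in> face_edges F \<longleftrightarrow>
     w = (a + 1, b) \<and> IneqA (a + 1) b \<in> strict_ineqs F \<or> w = (a, b + 1) \<and> IneqB a (b + 1) \<in> strict_ineqs F"
proof -
  have "((a, b), w) \<in> face_edges F \<longleftrightarrow> (\<exists>c\<in>strict_ineqs F. ((a, b), w) = ineq_edge c)"
    using axis_edge_not_from_inner[OF assms] by (simp add: face_edges_def image_iff)
  then show ?thesis unfolding ineq_edge_from_iff[OF assms] by blast
qed

lemma face_edge_target: "(u, w) \<in> face_edges F \<Longrightarrow> (u, w) \<in> axis_edges \<or> w \<in> I"
proof -
  assume "(u, w) \<in> face_edges F"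
  moreover have "w \<in> I" if "c \<in> strict_ineqs F" "(u, w) = ineq_edge c" for c
    using that strict_ineqs_subset[of F] by (cases c) (auto simp: ineqs_def)
  ultimately show ?thesis unfolding face_edges_def by blast
qed

text \<open>By interlacing, \<open>x\<^sub>a\<^sub>+\<^sub>1\<^sub>,\<^sub>b \<le> x\<^sub>a\<^sub>,\<^sub>b \<le> x\<^sub>a\<^sub>,\<^sub>b\<^sub>+\<^sub>1\<close> and \<open>x\<^sub>a\<^sub>+\<^sub>1\<^sub>,\<^sub>b \<le> x\<^sub>a\<^sub>+\<^sub>1\<^sub>,\<^sub>b\<^sub>+\<^sub>1 \<le> x\<^sub>a\<^sub>,\<^sub>b\<^sub>+\<^sub>1\<close>; so a gap
  \<open>x\<^sub>a\<^sub>+\<^sub>1\<^sub>,\<^sub>b < x\<^sub>a\<^sub>,\<^sub>b\<^sub>+\<^sub>1\<close> somewhere on \<open>F\<close> is what gives the vertex \<open>(a, b)\<close> of \<open>phi F\<close> an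
  incoming edge, and also an outgoing one.\<close>
definition diag_gap :: "(nat \<times> nat \<Rightarrow> real) set \<Rightarrow> nat \<times> nat \<Rightarrow> bool" where
  "diag_gap F u \<longleftrightarrow> (\<exists>x\<in>F. GT_ext n lam x (fst u + 1, snd u) < GT_ext n lam x (fst u, snd u + 1))"

lemma has_in_edge_iff_diag_gap:
  assumes FP: "F \<subseteq> P" and ab: "(a, b) \<in> I"
  shows "(\<exists>w. (w, (a, b)) \<in> face_edges F) \<longleftrightarrow> diag_gap F (a, b)"
proof -
  have "(\<exists>w. (w, (a, b)) \<in> face_edges F) \<longleftrightarrow> IneqA a b \<in> strict_ineqs F \<or> IneqB a b \<in> strict_ineqs F"
    using ab by (auto simp: in_edge_iff mem_GT_index)
  also have "\<dots> \<longleftrightarrow> diag_gap F (a, b)"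
  proof -
    have "lo x (IneqA a b) < hi x (IneqA a b) \<or> lo x (IneqB a b) < hi x (IneqB a b) \<longleftrightarrow>
        GT_ext n lam x (a + 1, b) < GT_ext n lam x (a, b + 1)" if "x \<in> F" for x
      using lo_le_hi[of x "IneqA a b"] lo_le_hi[of x "IneqB a b"] that FP ab by auto
    then show ?thesis using ab by (auto simp: strict_ineqs_def diag_gap_def)
  qed
  finally show ?thesis .
qed

lemma has_out_edge_iff_diag_gap:
  assumes FP: "F \<subseteq> P" and ab: "1 \<le> a" "1 \<le> b" "a + b < n"
  shows "(\<exists>w. ((a, b), w) \<in> face_edges F) \<longleftrightarrow> diag_gap F (a, b)"
proof -
  have I: "(a + 1, b) \<in> I" "(a, b + 1) \<in> I" using ab by (auto simp: mem_GT_index)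
  have "(\<exists>w. ((a, b), w) \<in> face_edges F) \<longleftrightarrow> IneqA (a + 1) b \<in> strict_ineqs F \<or> IneqB a (b + 1) \<in> strict_ineqs F"
    using ab by (auto simp: out_edge_iff)
  also have "\<dots> \<longleftrightarrow> diag_gap F (a, b)"
  proof -
    have "lo x (IneqA (a + 1) b) < hi x (IneqA (a + 1) b) \<or> lo x (IneqB a (b + 1)) < hi x (IneqB a (b + 1)) \<longleftrightarrow>
        GT_ext n lam x (a + 1, b) < GT_ext n lam x (a, b + 1)" if "x \<in> F" for x
      using lo_le_hi[of x "IneqA (a + 1) b"] lo_le_hi[of x "IneqB a (b + 1)"] that FP I by auto
    then show ?thesis using I by (auto simp: strict_ineqs_def diag_gap_def)
  qed
  finally show ?thesis .
qed

lemma diag_gap_boundary: "a + b = n \<Longrightarrow> diag_gap F (a, b) \<longleftrightarrow> F \<noteq> {} \<and> lam (a + 1) < lam a"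
  by (auto simp: diag_gap_def GT_ext_boundary)

end

locale gelfand_tsetlin_blocks = gelfand_tsetlin n lam for n lam +
  fixes k :: "nat list"
  assumes k_nonempty: "k \<noteq> []"
    and k_pos: "\<forall>a \<in> set k. 0 < a"
    and n_eq: "n = sum_list k"
    and lam_const_on_blocks: "\<forall>l \<in> {1..length k}. \<forall>a \<in> {psum k (l - 1) <.. psum k l}.
           \<forall>b \<in> {psum k (l - 1) <.. psum k l}. lam a = lam b"
    and lam_drops: "\<forall>l \<in> {1..<length k}. lam (psum k l) > lam (psum k l + 1)"
begin

definition block_ends :: "nat set" where
  "block_ends = {psum k l | l. l \<le> length k}"

lemma psum_strict_mono: "l < l' \<Longrightarrow> l' \<le> length k \<Longrightarrow> psum k l < psum k l'"
proof (induction l')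
  case (Suc l')
  have "psum k (Suc l') = psum k l' + k ! l'" using Suc by (simp add: psum_def take_Suc_conv_app_nth)
  moreover have "k ! l' > 0" using k_pos Suc by auto
  ultimately show ?case using Suc by (cases "l = l'") auto
qed simp

lemma psum_le_n: "l \<le> length k \<Longrightarrow> psum k l \<le> n"
  using psum_strict_mono[of l "length k"] by (cases "l = length k") (auto simp: psum_def n_eq)

lemma n_pos: "1 \<le> n"
  using k_nonempty k_pos by (cases k) (auto simp: n_eq)

lemma mem_terminals_iff: "(a, b) \<in> terminals k \<longleftrightarrow> a \<in> block_ends \<and> b = n - a"
  by (auto simp: terminals_def block_ends_def n_eq)

lemma block_ends_le_n: "a \<in> block_ends \<Longrightarrow> a \<le> n"
  using psum_le_n by (auto simp: block_ends_def)

lemma zero_mem_block_ends: "0 \<in> block_ends"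
  by (force simp: block_ends_def psum_def)

lemma n_mem_block_ends: "n \<in> block_ends"
  by (force simp: block_ends_def psum_def n_eq)

lemma level_terminal: "t \<in> terminals k \<Longrightarrow> level t = n"
  using block_ends_le_n by (cases t) (auto simp: mem_terminals_iff)

lemma lam_Suc_eq:
  assumes a: "1 \<le> a" "a < n" "a \<notin> block_ends"
  shows "lam (a + 1) = lam a"
proof -
  define l where "l = (LEAST l. a < psum k l)"
  have ex: "a < psum k (length k)" using a by (simp add: psum_def n_eq)
  then have al: "a < psum k l" unfolding l_def by (rule LeastI)
  have l_le: "l \<le> length k" unfolding l_def using ex by (rule Least_le)
  have l0: "l \<noteq> 0" using al by (cases l) (simp_all add: psum_def)
  then have "\<not> a < psum k (l - 1)" unfolding l_def by (metis diff_less l_def not_less_Least zero_less_one neq0_conv)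
  moreover have "psum k (l - 1) \<noteq> a" using a(3) l_le by (auto simp: block_ends_def)
  ultimately have "psum k (l - 1) < a" by simp
  moreover have "l \<in> {1..length k}" using l0 l_le by simp
  ultimately show ?thesis using lam_const_on_blocks al by force
qed

lemma lam_Suc_less_iff: "0 < a \<Longrightarrow> a < n \<Longrightarrow> lam (a + 1) < lam a \<longleftrightarrow> a \<in> block_ends"
proof
  assume a: "0 < a" "a < n" "a \<in> block_ends"
  then obtain l where l: "l \<le> length k" "a = psum k l" by (auto simp: block_ends_def)
  have "l \<noteq> 0" using l a by (cases l) (simp_all add: psum_def)
  moreover have "l \<noteq> length k" using l a by (auto simp: psum_def n_eq)
  ultimately show "lam (a + 1) < lam a" using lam_drops l by auto
next
  assume a: "0 < a" "a < n" "lam (a + 1) < lam a"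
  show "a \<in> block_ends" using lam_Suc_eq[of a] a by (cases "a \<in> block_ends") auto
qed

lemma lam_Suc_le: "0 < a \<Longrightarrow> a < n \<Longrightarrow> lam (a + 1) \<le> lam a"
  using lam_Suc_eq lam_Suc_less_iff by (cases "a \<in> block_ends") (auto intro: less_imp_le)

lemma vertical_axis_edge: "((0, i), (0, i + 1)) \<in> face_edges F \<longleftrightarrow> i < n"
  and horizontal_axis_edge: "((i, 0), (i + 1, 0)) \<in> face_edges F \<longleftrightarrow> i < n"
proof -
  have "((0, i), (0, i + 1)) \<in> face_edges F \<longleftrightarrow> ((0, i), (0, i + 1)) \<in> axis_edges"
    "((i, 0), (i + 1, 0)) \<in> face_edges F \<longleftrightarrow> ((i, 0), (i + 1, 0)) \<in> axis_edges"
    using face_edge_target[of "(0, i)" "(0, i + 1)" F] face_edge_target[of "(i, 0)" "(i + 1, 0)" F]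
    by (auto simp: face_edges_def mem_GT_index)
  moreover have "i \<le> n - 1 \<longleftrightarrow> i < n" using n_pos by linarith
  ultimately show "((0, i), (0, i + 1)) \<in> face_edges F \<longleftrightarrow> i < n" "((i, 0), (i + 1, 0)) \<in> face_edges F \<longleftrightarrow> i < n"
    using mem_axis_edges[of i] by simp_all
qed

lemma face_edge_level:
  assumes e: "(u, w) \<in> face_edges F"
  shows "level w \<le> n \<and> level u < level w"
proof
  show "level u < level w" using unit_step_level[OF unit_stepsD[OF unit_steps_face_edges e]] by simp
  from face_edge_target[OF e] show "level w \<le> n"
  proof
    assume "(u, w) \<in> axis_edges"
    then show ?thesis using n_pos by (auto simp: axis_edges_def)
  qed (cases w, simp add: mem_GT_index)
qed

lemma Field_face_edges_level: "u \<in> Field (face_edges F) \<Longrightarrow> level u \<le> n"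
proof -
  assume "u \<in> Field (face_edges F)"
  then obtain w where "(u, w) \<in> face_edges F \<or> (w, u) \<in> face_edges F" by (auto simp: Field_eq_endpoints)
  then show ?thesis using face_edge_level[of u w F] face_edge_level[of w u F] by auto
qed

end

context gelfand_tsetlin_blocks
begin

lemma face_vertex_in_edge:
  assumes FP: "F \<subseteq> P" and u: "u \<in> Field (face_edges F)" "u \<noteq> (0, 0)"
  shows "\<exists>w. (w, u) \<in> face_edges F"
proof -
  obtain a b where ab: "u = (a, b)" by (cases u)
  have le: "a + b \<le> n" using Field_face_edges_level[OF u(1)] ab by simp
  consider "a = 0" | "b = 0" | "1 \<le> a" "1 \<le> b" by linarith
  then show ?thesis
  proof cases
    case 1
    then show ?thesis using vertical_axis_edge[of "b - 1" F] ab u le by (cases b) auto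
  next
    case 2
    then show ?thesis using horizontal_axis_edge[of "a - 1" F] ab u le by (cases a) auto
  next
    case 3
    show ?thesis
    proof (rule ccontr)
      assume no_in: "\<nexists>w. (w, u) \<in> face_edges F"
      then obtain w where w: "(u, w) \<in> face_edges F" using u(1) by (auto simp: Field_eq_endpoints)
      then have "a + b < n" using face_edge_level[OF w] unit_stepsD[OF unit_steps_face_edges w] ab
        by (auto simp: unit_step_def)
      then have "diag_gap F (a, b)" using has_out_edge_iff_diag_gap[OF FP 3] w ab by blast
      moreover have "(a, b) \<in> I" using 3 le by (simp add: mem_GT_index)
      ultimately show False using has_in_edge_iff_diag_gap[OF FP] no_in ab by blast
    qed
  qed
qed

lemma face_vertex_out_edge:
  assumes FP: "F \<subseteq> P" and u: "u \<in> Field (face_edges F)" "u \<notin> terminals k"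
  shows "\<exists>w. (u, w) \<in> face_edges F"
proof -
  obtain a b where ab: "u = (a, b)" by (cases u)
  have le: "a + b \<le> n" using Field_face_edges_level[OF u(1)] ab by simp
  consider "a = 0" | "b = 0" | "1 \<le> a" "1 \<le> b" by linarith
  then show ?thesis
  proof cases
    case 1
    then have "b \<noteq> n" using u ab zero_mem_block_ends by (auto simp: mem_terminals_iff)
    then show ?thesis using vertical_axis_edge[of b F] 1 ab le by auto
  next
    case 2
    then have "a \<noteq> n" using u ab n_mem_block_ends by (auto simp: mem_terminals_iff)
    then show ?thesis using horizontal_axis_edge[of a F] 2 ab le by auto
  next
    case 3
    then have abI: "(a, b) \<in> I" using le by (simp add: mem_GT_index)
    show ?thesis
    proof (rule ccontr)
      assume no_out: "\<nexists>w. (u, w) \<in> face_edges F"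
      then have "\<exists>w. (w, (a, b)) \<in> face_edges F" using u(1) ab by (auto simp: Field_eq_endpoints)
      then have gap: "diag_gap F (a, b)" using has_in_edge_iff_diag_gap[OF FP abI] by blast
      show False
      proof (cases "a + b < n")
        case True
        then show False using has_out_edge_iff_diag_gap[OF FP 3 True] gap no_out ab by blast
      next
        case False
        then have "a + b = n" using le by simp
        then have "a \<in> block_ends" using gap diag_gap_boundary lam_Suc_less_iff 3 by simp
        then show False using u(2) ab \<open>a + b = n\<close> by (auto simp: mem_terminals_iff)
      qed
    qed
  qed
qed

lemma terminals_subset_Field_face_edges:
  assumes FP: "F \<subseteq> P" and F: "F \<noteq> {}"
  shows "terminals k \<subseteq> Field (face_edges F)"
proof
  fix t assume "t \<in> terminals k"
  then obtain a where t: "t = (a, n - a)" "a \<in> block_ends" by (cases t) (auto simp: mem_terminals_iff)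
  have "a \<le> n" using block_ends_le_n t by simp
  consider "a = 0" | "a = n" | "0 < a" "a < n" using \<open>a \<le> n\<close> by linarith
  then show "t \<in> Field (face_edges F)"
  proof cases
    case 1
    have "((0, n - 1), (0, n)) \<in> face_edges F" using vertical_axis_edge[of "n - 1" F] n_pos by simp
    then show ?thesis using FieldI2 t 1 by fastforce
  next
    case 2
    have "((n - 1, 0), (n, 0)) \<in> face_edges F" using horizontal_axis_edge[of "n - 1" F] n_pos by simp
    then show ?thesis using FieldI2 t 2 by fastforce
  next
    case 3
    then have "diag_gap F (a, n - a)" using diag_gap_boundary lam_Suc_less_iff t F by simp
    moreover have "(a, n - a) \<in> I" using 3 by (simp add: mem_GT_index)
    ultimately obtain w where "(w, (a, n - a)) \<in> face_edges F" using has_in_edge_iff_diag_gap[OF FP] by blast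
    then show ?thesis using FieldI2 t by fastforce
  qed
qed

lemma walk_from_origin:
  assumes FP: "F \<subseteq> P"
  shows "u \<in> Field (face_edges F) \<Longrightarrow> \<exists>vs. walk (face_edges F) vs \<and> hd vs = (0, 0) \<and> last vs = u"
proof (induction "level u" arbitrary: u)
  case 0
  then have "u = (0, 0)" by (cases u) auto
  then show ?case by (intro exI[of _ "[u]"]) auto
next
  case (Suc m)
  then obtain w where w: "(w, u) \<in> face_edges F" using face_vertex_in_edge[OF FP Suc(3)] by fastforce
  then have "m = level w" using Suc(2) unit_step_level unit_stepsD[OF unit_steps_face_edges] by fastforce
  moreover have "w \<in> Field (face_edges F)" using FieldI1[OF w] .
  ultimately obtain vs where vs: "walk (face_edges F) vs" "hd vs = (0, 0)" "last vs = w"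
    using Suc(1) by blast
  then have "walk (face_edges F) (vs @ [u])" using walk_append[OF vs(1), of "[u]"] w by simp
  moreover have "hd (vs @ [u]) = (0, 0)" using vs walk_not_Nil by fastforce
  ultimately show ?case by (intro exI[of _ "vs @ [u]"]) auto
qed

lemma walk_to_terminal:
  assumes FP: "F \<subseteq> P"
  shows "u \<in> Field (face_edges F) \<Longrightarrow> \<exists>vs. walk (face_edges F) vs \<and> hd vs = u \<and> last vs \<in> terminals k"
proof (induction "n - level u" arbitrary: u rule: less_induct)
  case less
  show ?case
  proof (cases "u \<in> terminals k")
    case True then show ?thesis by (intro exI[of _ "[u]"]) auto
  next
    case False
    then obtain w where w: "(u, w) \<in> face_edges F" using face_vertex_out_edge[OF FP less(2)] by blast
    then have "n - level w < n - level u"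
      using face_edge_level[OF w] unit_step_level unit_stepsD[OF unit_steps_face_edges] by fastforce
    moreover have "w \<in> Field (face_edges F)" using FieldI2[OF w] .
    ultimately obtain vs where vs: "walk (face_edges F) vs" "hd vs = w" "last vs \<in> terminals k"
      using less(1) by blast
    then have "walk (face_edges F) (u # vs)" "last (u # vs) = last vs"
      using w walk_not_Nil by (auto simp: walk_Cons)
    then show ?thesis using vs by (intro exI[of _ "u # vs"]) auto
  qed
qed

lemma unit_steps_Gamma_edges: "unit_steps (Gamma_edges k)"
  by (auto simp: unit_steps_def unit_step_def Gamma_edges_def Qplus_edges_def)

lemma Gamma_path_imp_walk: "Gamma_path k ws \<Longrightarrow> walk (Gamma_edges k) ws"
  unfolding Gamma_path_def walk_iff_nth by blast

lemma positive_pathD: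
  assumes "positive_path k vs"
  shows "walk (Gamma_edges k) vs" "hd vs = (0, 0)" "last vs \<in> terminals k" "length vs = n + 1"
proof -
  show walk: "walk (Gamma_edges k) vs" using assms Gamma_path_imp_walk by (simp add: positive_path_def)
  show "hd vs = (0, 0)" "last vs \<in> terminals k" using assms by (simp_all add: positive_path_def)
  then show "length vs = n + 1"
    using walk_level_last[OF unit_steps_Gamma_edges walk] walk_not_Nil[OF walk] level_terminal
    by (cases vs) auto
qed

text \<open>All monotone lattice walks from the origin to a terminal have length \<open>n + 1\<close>.\<close>
lemma positive_path_if_walk:
  assumes E: "unit_steps E" and vs: "walk E vs" "hd vs = (0, 0)" "last vs \<in> terminals k"
  shows "positive_path k vs"
proof -
  have GV: "set vs \<subseteq> Gamma_vertices k"
  proof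
    fix w assume "w \<in> set vs"
    then have "w \<le> last vs" using walk_le_last[OF E vs(1)] by blast
    then show "w \<in> Gamma_vertices k" using vs(3) unfolding Gamma_vertices_def
      by (cases w) (auto simp: less_eq_prod_def intro!: bexI[of _ "last vs"])
  qed
  have "Gamma_path k vs"
    unfolding Gamma_path_def
  proof (intro conjI allI impI GV walk_not_Nil[OF vs(1)])
    fix i assume i: "Suc i < length vs"
    then have "unit_step (vs ! i) (vs ! Suc i)" using vs(1) unit_stepsD[OF E] by (simp add: walk_iff_nth)
    then have "(vs ! i, vs ! Suc i) \<in> Qplus_edges"
      unfolding unit_step_def Qplus_edges_def by (cases "vs ! i") auto
    moreover have "vs ! i \<in> Gamma_vertices k" "vs ! Suc i \<in> Gamma_vertices k" using i GV by auto
    ultimately show "(vs ! i, vs ! Suc i) \<in> Gamma_edges k" by (simp add: Gamma_edges_def)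
  qed
  moreover have "length vs \<le> length ws" if ws: "Gamma_path k ws" "hd ws = (0, 0)" "last ws = last vs" for ws
  proof -
    have "level (last ws) = length ws - 1"
      using walk_level_last[OF unit_steps_Gamma_edges Gamma_path_imp_walk[OF ws(1)]] ws(2) by simp
    moreover have "level (last vs) = length vs - 1" using walk_level_last[OF E vs(1)] vs(2) by simp
    ultimately show ?thesis using ws walk_not_Nil[OF vs(1)] by (cases ws) (auto simp: Gamma_path_def)
  qed
  ultimately show ?thesis using vs by (simp add: positive_path_def)
qed

lemma path_graph_eq: "path_graph vs = (set vs, walk_edges vs)"
  by (simp add: path_graph_def walk_edges_eq_nth)

lemma face_edge_on_positive_path:
  assumes FP: "F \<subseteq> P" and e: "(u, w) \<in> face_edges F"
  shows "\<exists>vs. positive_path k vs \<and> walk_edges vs \<subseteq> face_edges F \<and> (u, w) \<in> walk_edges vs"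
proof -
  obtain xs where xs: "walk (face_edges F) xs" "hd xs = (0, 0)" "last xs = u"
    using walk_from_origin[OF FP FieldI1[OF e]] by blast
  obtain ys where ys: "walk (face_edges F) ys" "hd ys = w" "last ys \<in> terminals k"
    using walk_to_terminal[OF FP FieldI2[OF e]] by blast
  have ne: "xs \<noteq> []" "ys \<noteq> []" using xs(1) ys(1) walk_not_Nil by blast+
  have walk: "walk (face_edges F) (xs @ ys)" using walk_append[OF xs(1) ys(1)] xs(3) ys(2) e by simp
  then have "positive_path k (xs @ ys)"
    using positive_path_if_walk[OF unit_steps_face_edges] ne xs(2) ys(3) by simp
  moreover have "walk_edges (xs @ ys) \<subseteq> face_edges F" using walk walk_edges_subset by blast
  moreover have "(u, w) \<in> walk_edges (xs @ ys)" using walk_edges_append[OF ne] xs(3) ys(2) by simp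
  ultimately show ?thesis by blast
qed

lemma Field_positive_paths:
  assumes Ps: "\<forall>vs\<in>Ps. positive_path k vs"
  shows "Field (\<Union>vs\<in>Ps. walk_edges vs) = (\<Union>vs\<in>Ps. set vs)"
proof
  show "Field (\<Union>vs\<in>Ps. walk_edges vs) \<subseteq> (\<Union>vs\<in>Ps. set vs)"
  proof
    fix x assume "x \<in> Field (\<Union>vs\<in>Ps. walk_edges vs)"
    then obtain vs y where vs: "vs \<in> Ps" "(x, y) \<in> walk_edges vs \<or> (y, x) \<in> walk_edges vs"
      by (auto simp: Field_eq_endpoints)
    then have "x \<in> set vs" using walk_edge_vertices[of x y vs] walk_edge_vertices[of y x vs] by blast
    then show "x \<in> (\<Union>vs\<in>Ps. set vs)" using vs(1) by blast
  qed
  show "(\<Union>vs\<in>Ps. set vs) \<subseteq> Field (\<Union>vs\<in>Ps. walk_edges vs)"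
  proof clarify
    fix vs x assume vs: "vs \<in> Ps" "x \<in> set vs"
    then have "length vs \<ge> 2" using positive_pathD(4) n_pos Ps by simp
    then obtain y where "(x, y) \<in> walk_edges vs \<or> (y, x) \<in> walk_edges vs"
      using vertex_on_walk_edge[OF _ vs(2)] by blast
    then show "x \<in> Field (\<Union>vs\<in>Ps. walk_edges vs)" using vs(1) by (auto intro: FieldI1 FieldI2)
  qed
qed

lemma phi_mem_Gamma_faces:
  assumes F: "F face_of P" "F \<noteq> {}"
  shows "phi n lam F \<in> Gamma_faces k"
proof -
  have FP: "F \<subseteq> P" using F face_of_imp_subset by blast
  define Ps where "Ps = {vs. positive_path k vs \<and> walk_edges vs \<subseteq> face_edges F}"
  have E: "face_edges F = (\<Union>vs\<in>Ps. walk_edges vs)"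
  proof
    show "face_edges F \<subseteq> (\<Union>vs\<in>Ps. walk_edges vs)"
    proof clarify
      fix u w assume "(u, w) \<in> face_edges F"
      then obtain vs where "positive_path k vs" "walk_edges vs \<subseteq> face_edges F" "(u, w) \<in> walk_edges vs"
        using face_edge_on_positive_path[OF FP] by blast
      then show "(u, w) \<in> (\<Union>vs\<in>Ps. walk_edges vs)" unfolding Ps_def by blast
    qed
  qed (auto simp: Ps_def)
  have V: "Field (face_edges F) = (\<Union>vs\<in>Ps. set vs)"
    unfolding E by (rule Field_positive_paths) (simp add: Ps_def)
  have T: "terminals k \<subseteq> fst (phi n lam F)"
    using terminals_subset_Field_face_edges[OF FP F(2)] by (simp add: phi_eq_face_edges)
  have PP: "\<forall>vs\<in>Ps. positive_path k vs" by (simp add: Ps_def)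
  have fst: "fst (phi n lam F) = (\<Union>vs\<in>Ps. fst (path_graph vs))"
    by (simp add: phi_eq_face_edges path_graph_eq V)
  have snd: "snd (phi n lam F) = (\<Union>vs\<in>Ps. snd (path_graph vs))"
    by (simp add: phi_eq_face_edges path_graph_eq E)
  show ?thesis unfolding Gamma_faces_def mem_Collect_eq by (intro conjI exI[of _ Ps] T PP fst snd)
qed

end

section \<open>Every face of \<open>\<Gamma>\<^sub>k\<close> is some \<open>phi F\<close>\<close>

context gelfand_tsetlin_blocks
begin

context
  fixes vs :: "(nat \<times> nat) list"
  assumes vs: "positive_path k vs"
begin

lemma positive_path_le_last: "w \<in> set vs \<Longrightarrow> w \<le> last vs"
  using walk_le_last[OF unit_steps_Gamma_edges positive_pathD(1)[OF vs]] .

lemma positive_path_comparable: "p \<in> set vs \<Longrightarrow> q \<in> set vs \<Longrightarrow> p \<le> q \<or> q \<le> p"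
  using walk_vertices_comparable[OF unit_steps_Gamma_edges positive_pathD(1)[OF vs]] .

lemma positive_path_meets_column: "w \<in> set vs \<Longrightarrow> a \<le> fst w \<Longrightarrow> \<exists>c \<le> snd w. (a, c) \<in> set vs"
  using walk_meets_column[OF unit_steps_Gamma_edges positive_pathD(1)[OF vs]] positive_pathD(2)[OF vs] by simp

lemma positive_path_edge_unit_step: "(u, w) \<in> walk_edges vs \<Longrightarrow> unit_step u w"
  using walk_edge_unit_step[OF unit_steps_Gamma_edges positive_pathD(1)[OF vs]] .

lemma positive_path_last: "\<exists>a. last vs = (a, n - a) \<and> a \<in> block_ends \<and> a \<le> n"
  using positive_pathD(3)[OF vs] block_ends_le_n by (cases "last vs") (auto simp: mem_terminals_iff)

lemma positive_path_level_last: "level (last vs) = n"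
  using positive_pathD(3)[OF vs] level_terminal by blast

lemma positive_path_meets_level: "m \<le> n \<Longrightarrow> \<exists>w\<in>set vs. level w = m"
  using walk_meets_level[OF unit_steps_Gamma_edges positive_pathD(1)[OF vs]]
    positive_pathD(2)[OF vs] positive_path_level_last by simp

lemma positive_path_in_edge: "w \<in> set vs \<Longrightarrow> w \<noteq> (0, 0) \<Longrightarrow> \<exists>u. (u, w) \<in> walk_edges vs"
  using walk_in_edge[OF positive_pathD(1)[OF vs]] positive_pathD(2)[OF vs] by simp

lemma positive_path_out_edge: "w \<in> set vs \<Longrightarrow> level w < n \<Longrightarrow> \<exists>u. (w, u) \<in> walk_edges vs"
  using walk_out_edge[OF positive_pathD(1)[OF vs]] positive_path_level_last by fastforce

end

text \<open>It is
  monotone in the Gelfand--Tsetlin pattern order, and jumps exactly across the edges of the path.\<close>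
definition path_indicator :: "(nat \<times> nat) list \<Rightarrow> nat \<times> nat \<Rightarrow> real" where
  "path_indicator vs c = (if \<exists>b < snd c. (fst c, b) \<in> set vs then 1 else 0)"

lemma path_indicator_le_Suc_col: "path_indicator vs (i, j) \<le> path_indicator vs (i, j + 1)"
  by (auto simp: path_indicator_def less_Suc_eq)

lemma path_indicator_Suc_row_le:
  assumes vs: "positive_path k vs"
  shows "path_indicator vs (i + 1, j) \<le> path_indicator vs (i, j)"
proof (cases "\<exists>b < j. (i + 1, b) \<in> set vs")
  case True
  then obtain b where b: "b < j" "(i + 1, b) \<in> set vs" by blast
  then obtain c where "c \<le> b" "(i, c) \<in> set vs" using positive_path_meets_column[OF vs b(2), of i] by auto
  then have "\<exists>b<j. (i, b) \<in> set vs" using b(1) by (intro exI[of _ c]) auto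
  then show ?thesis by (simp add: path_indicator_def)
qed (auto simp: path_indicator_def)

lemma path_indicator_jump_col:
  assumes vs: "positive_path k vs" and ij: "1 \<le> i" "1 \<le> j"
  shows "path_indicator vs (i, j) < path_indicator vs (i, j + 1) \<longleftrightarrow> ((i - 1, j), (i, j)) \<in> walk_edges vs"
proof
  assume "path_indicator vs (i, j) < path_indicator vs (i, j + 1)"
  then have before: "\<not> (\<exists>b < j. (i, b) \<in> set vs)" and "\<exists>b < j + 1. (i, b) \<in> set vs"
    by (auto simp: path_indicator_def split: if_splits)
  then have "(i, j) \<in> set vs" using less_Suc_eq by auto
  then obtain u where u: "(u, (i, j)) \<in> walk_edges vs" using positive_path_in_edge[OF vs] ij by fastforce
  then have "u \<in> set vs" using walk_edge_vertices[OF u] by simp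
  then have "u \<noteq> (i, j - 1)" using before ij by auto
  then show "((i - 1, j), (i, j)) \<in> walk_edges vs"
    using u positive_path_edge_unit_step[OF vs u] by (cases u) (auto simp: unit_step_def)
next
  assume e: "((i - 1, j), (i, j)) \<in> walk_edges vs"
  then have s: "(i - 1, j) \<in> set vs" "(i, j) \<in> set vs" using walk_edge_vertices[OF e] by simp_all
  have "\<not> (i, b) \<in> set vs" if "b < j" for b
    using positive_path_comparable[OF vs _ s(1), of "(i, b)"] that ij by auto
  then show "path_indicator vs (i, j) < path_indicator vs (i, j + 1)"
    using s by (auto simp: path_indicator_def)
qed

text \<open>The path meets level \<open>i + j - 1\<close> in row \<open>i\<close>: in a lower row it could not reach \<open>(i, b\<^sub>0)\<close>,
  and in a higher row it would have crossed row \<open>i + 1\<close> before column \<open>j\<close>.\<close>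
lemma path_through_corner:
  assumes vs: "positive_path k vs" and ij: "(i, j) \<in> I"
    and no: "\<not> (\<exists>b < j. (i + 1, b) \<in> set vs)" and b0: "b0 < j" "(i, b0) \<in> set vs"
  shows "(i, j - 1) \<in> set vs"
proof -
  have ij': "1 \<le> i" "1 \<le> j" "i + j \<le> n" using ij by (auto simp: mem_GT_index)
  have "\<exists>u\<in>set vs. level u = i + j - 1" using positive_path_meets_level[OF vs] ij' by simp
  then obtain u where u: "u \<in> set vs" "level u = i + j - 1" by blast
  have "i \<le> fst u" using positive_path_comparable[OF vs u(1) b0(2)] u b0 by (auto simp: less_eq_prod_def)
  moreover have "\<not> i + 1 \<le> fst u"
  proof
    assume "i + 1 \<le> fst u"
    then obtain c where "c \<le> snd u" "(i + 1, c) \<in> set vs" using positive_path_meets_column[OF vs u(1)] by blast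
    moreover have "snd u < j" using u \<open>i + 1 \<le> fst u\<close> ij' by linarith
    ultimately show False using no by auto
  qed
  ultimately have "u = (i, j - 1)" using u ij' by (cases u) auto
  then show ?thesis using u by simp
qed

lemma path_indicator_jump_row:
  assumes vs: "positive_path k vs" and ij: "(i, j) \<in> I"
  shows "path_indicator vs (i + 1, j) < path_indicator vs (i, j) \<longleftrightarrow> ((i, j - 1), (i, j)) \<in> walk_edges vs"
proof
  have ij': "1 \<le> i" "1 \<le> j" "i + j \<le> n" using ij by (auto simp: mem_GT_index)
  assume "path_indicator vs (i + 1, j) < path_indicator vs (i, j)"
  then have no: "\<not> (\<exists>b < j. (i + 1, b) \<in> set vs)" and "\<exists>b < j. (i, b) \<in> set vs"
    by (auto simp: path_indicator_def split: if_splits)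
  then have "(i, j - 1) \<in> set vs" using path_through_corner[OF vs ij no] by blast
  moreover have "level (i, j - 1) < n" using ij' by simp
  ultimately obtain w where w: "((i, j - 1), w) \<in> walk_edges vs" using positive_path_out_edge[OF vs] by blast
  then have "w \<in> set vs" using walk_edge_vertices[OF w] by simp
  then have "w \<noteq> (i + 1, j - 1)" using no ij' by auto
  then show "((i, j - 1), (i, j)) \<in> walk_edges vs"
    using w positive_path_edge_unit_step[OF vs w] ij' by (auto simp: unit_step_def)
next
  assume e: "((i, j - 1), (i, j)) \<in> walk_edges vs"
  then have s: "(i, j - 1) \<in> set vs" "(i, j) \<in> set vs" using walk_edge_vertices[OF e] by simp_all
  have "\<not> (i + 1, b) \<in> set vs" if "b < j" for b
    using positive_path_comparable[OF vs _ s(2), of "(i + 1, b)"] that by auto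
  then show "path_indicator vs (i + 1, j) < path_indicator vs (i, j)"
    using s ij by (auto simp: path_indicator_def mem_GT_index intro!: exI[of _ "j - 1"])
qed

lemma path_indicator_boundary:
  assumes vs: "positive_path k vs" and i: "1 \<le> i" "i \<le> n"
  shows "path_indicator vs (i, n + 1 - i) = (if i \<le> fst (last vs) then 1 else 0)"
proof -
  obtain a where a: "last vs = (a, n - a)" "a \<le> n" using positive_path_last[OF vs] by blast
  have "(\<exists>b < n + 1 - i. (i, b) \<in> set vs) \<longleftrightarrow> i \<le> a"
  proof
    assume "\<exists>b < n + 1 - i. (i, b) \<in> set vs"
    then show "i \<le> a" using positive_path_le_last[OF vs] a by fastforce
  next
    assume "i \<le> a"
    moreover have "last vs \<in> set vs" using positive_pathD(4)[OF vs] by (cases vs) auto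
    ultimately obtain c where "c \<le> n - a" "(i, c) \<in> set vs"
      using positive_path_meets_column[OF vs, of "last vs" i] a by auto
    then show "\<exists>b < n + 1 - i. (i, b) \<in> set vs" using a \<open>i \<le> a\<close> i by (intro exI[of _ c]) auto
  qed
  then show ?thesis using a by (simp add: path_indicator_def)
qed

end

lemma weighted_sum_less_iff:
  fixes w L U :: "'a \<Rightarrow> real"
  assumes "finite A" and h: "\<forall>a\<in>A. 0 \<le> w a \<and> L a \<le> U a"
  shows "(\<Sum>a\<in>A. w a * L a) < (\<Sum>a\<in>A. w a * U a) \<longleftrightarrow> (\<exists>a\<in>A. 0 < w a \<and> L a < U a)"
proof
  assume less: "(\<Sum>a\<in>A. w a * L a) < (\<Sum>a\<in>A. w a * U a)"
  show "\<exists>a\<in>A. 0 < w a \<and> L a < U a"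
  proof (rule ccontr)
    assume "\<not> (\<exists>a\<in>A. 0 < w a \<and> L a < U a)"
    then have "\<forall>a\<in>A. w a * L a = w a * U a" using h by (metis antisym_conv1 mult_zero_left not_less)
    then have "(\<Sum>a\<in>A. w a * L a) = (\<Sum>a\<in>A. w a * U a)" by (intro sum.cong) auto
    then show False using less by simp
  qed
next
  assume "\<exists>a\<in>A. 0 < w a \<and> L a < U a"
  then obtain a where a: "a \<in> A" "0 < w a" "L a < U a" by blast
  show "(\<Sum>a\<in>A. w a * L a) < (\<Sum>a\<in>A. w a * U a)"
  proof (rule sum_strict_mono_ex1[OF \<open>finite A\<close>])
    show "\<forall>x\<in>A. w x * L x \<le> w x * U x" using h by (simp add: mult_left_mono)
    show "\<exists>a\<in>A. w a * L a < w a * U a" using a by (intro bexI[of _ a]) auto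
  qed
qed

lemma weighted_sum_mono:
  fixes w L U :: "'a \<Rightarrow> real"
  shows "\<forall>a\<in>A. 0 \<le> w a \<and> L a \<le> U a \<Longrightarrow> (\<Sum>a\<in>A. w a * L a) \<le> (\<Sum>a\<in>A. w a * U a)"
  by (intro sum_mono) (simp add: mult_left_mono)

context gelfand_tsetlin_blocks
begin

definition lam_gap :: "nat \<Rightarrow> real" where
  "lam_gap a = lam a - lam (a + 1)"

lemma sum_lam_gap: "i \<le> m \<Longrightarrow> (\<Sum>a = i..<m. lam_gap a) = lam i - lam m"
  using sum_Suc_diff'[of i m "\<lambda>a. - lam a"] by (simp add: lam_gap_def)

text \<open>A path ending at \<open>(a, n - a)\<close> gets the share
  \<open>lam_gap a / #{paths ending there}\<close>, so that the boundary values \<open>lam i\<close> are reproduced.\<close>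

context
  fixes Ps :: "(nat \<times> nat) list set"
  assumes Ps_positive: "\<forall>vs\<in>Ps. positive_path k vs"
    and Ps_terminals: "terminals k \<subseteq> (\<Union>vs\<in>Ps. set vs)"
begin

definition paths_ending :: "nat \<Rightarrow> nat" where
  "paths_ending a = card {vs\<in>Ps. fst (last vs) = a}"

definition path_weight :: "(nat \<times> nat) list \<Rightarrow> real" where
  "path_weight vs = (let a = fst (last vs) in if 0 < a \<and> a < n then lam_gap a / paths_ending a else 0)"

definition path_point :: "nat \<times> nat \<Rightarrow> real" where
  "path_point c = (if c \<in> I then lam n + (\<Sum>vs\<in>Ps. path_weight vs * path_indicator vs c) else 0)"

lemma finite_paths: "finite Ps"
proof (rule finite_subset)
  show "Ps \<subseteq> {xs. set xs \<subseteq> {0..n} \<times> {0..n} \<and> length xs \<le> n + 1}"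
  proof clarify
    fix vs assume "vs \<in> Ps"
    then have vs: "positive_path k vs" using Ps_positive by blast
    obtain a where a: "last vs = (a, n - a)" "a \<le> n" using positive_path_last[OF vs] by blast
    have "w \<in> {0..n} \<times> {0..n}" if "w \<in> set vs" for w
      using positive_path_le_last[OF vs that] a by (cases w) auto
    then show "set vs \<subseteq> {0..n} \<times> {0..n} \<and> length vs \<le> n + 1" using positive_pathD(4)[OF vs] by auto
  qed
  show "finite {xs. set xs \<subseteq> {0..n} \<times> {0..n} \<and> length xs \<le> n + 1}"
    by (rule finite_lists_length_le) simp
qed

lemma last_eq_terminal:
  assumes "vs \<in> Ps" "(a, n - a) \<in> set vs" "a \<le> n"
  shows "last vs = (a, n - a)"
proof -
  have vs: "positive_path k vs" using assms(1) Ps_positive by blast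
  have "level (a, n - a) = level (last vs)" using positive_path_level_last[OF vs] assms(3) by simp
  then show ?thesis using le_level_eq_imp_eq[OF positive_path_le_last[OF vs assms(2)]] by simp
qed

lemma paths_ending_pos: "a \<in> block_ends \<Longrightarrow> 0 < paths_ending a"
proof -
  assume a: "a \<in> block_ends"
  then have "(a, n - a) \<in> terminals k" by (simp add: mem_terminals_iff)
  then obtain vs where vs: "vs \<in> Ps" "(a, n - a) \<in> set vs" using Ps_terminals by blast
  then have "last vs = (a, n - a)" using last_eq_terminal block_ends_le_n a by blast
  then have "vs \<in> {vs\<in>Ps. fst (last vs) = a}" using vs by simp
  moreover have "finite {vs\<in>Ps. fst (last vs) = a}" using finite_paths by simp
  ultimately show ?thesis unfolding paths_ending_def card_gt_0_iff by blast
qed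

lemma lam_gap_nonneg: "0 < a \<Longrightarrow> a < n \<Longrightarrow> 0 \<le> lam_gap a"
  using lam_Suc_le by (simp add: lam_gap_def)

lemma lam_gap_eq_0:
  assumes "0 < a" "a < n" "paths_ending a = 0"
  shows "lam_gap a = 0"
proof -
  have "a \<notin> block_ends" using paths_ending_pos[of a] assms(3) by auto
  then show ?thesis using lam_Suc_eq[of a] assms by (simp add: lam_gap_def)
qed

lemma path_weight_nonneg: "0 \<le> path_weight vs"
  using lam_gap_nonneg by (simp add: path_weight_def Let_def)

lemma path_weight_pos:
  assumes "vs \<in> Ps" "(i, j) \<in> set vs" "1 \<le> i" "1 \<le> j"
  shows "0 < path_weight vs"
proof -
  have vs: "positive_path k vs" using Ps_positive assms(1) by blast
  obtain a where a: "last vs = (a, n - a)" "a \<in> block_ends" "a \<le> n" using positive_path_last[OF vs] by blast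
  have "(i, j) \<le> (a, n - a)" using positive_path_le_last[OF vs assms(2)] a by simp
  then have "0 < a" "a < n" using assms by auto
  moreover have "0 < lam_gap a" using lam_Suc_less_iff a \<open>0 < a\<close> \<open>a < n\<close> by (simp add: lam_gap_def)
  ultimately show ?thesis using paths_ending_pos[OF a(2)] a by (simp add: path_weight_def)
qed

lemma path_weights_on_boundary:
  assumes i: "1 \<le> i" "i \<le> n"
  shows "(\<Sum>vs\<in>Ps. path_weight vs * path_indicator vs (i, n + 1 - i)) = lam i - lam n"
proof -
  let ?ending = "\<lambda>a. {vs\<in>Ps. fst (last vs) = a}"
  have "(\<Sum>vs\<in>Ps. path_weight vs * path_indicator vs (i, n + 1 - i))
      = (\<Sum>vs\<in>Ps. if i \<le> fst (last vs) then path_weight vs else 0)"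
    using path_indicator_boundary[OF _ i] Ps_positive by (intro sum.cong) auto
  also have "\<dots> = (\<Sum>a\<in>{0..n}. \<Sum>vs\<in>?ending a. if i \<le> fst (last vs) then path_weight vs else 0)"
  proof (rule sum.group[symmetric, OF finite_paths])
    show "(\<lambda>vs. fst (last vs)) ` Ps \<subseteq> {0..n}" using positive_path_last Ps_positive by fastforce
  qed simp
  also have "\<dots> = (\<Sum>a\<in>{0..n}. if a \<in> {i..<n} then lam_gap a else 0)"
  proof (rule sum.cong[OF refl])
    fix a
    have "(\<Sum>vs\<in>?ending a. if i \<le> fst (last vs) then path_weight vs else 0)
        = (\<Sum>vs\<in>?ending a. if i \<le> a \<and> 0 < a \<and> a < n then lam_gap a / paths_ending a else 0)"
      by (rule sum.cong) (auto simp: path_weight_def Let_def)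
    also have "\<dots> = paths_ending a * (if i \<le> a \<and> 0 < a \<and> a < n then lam_gap a / paths_ending a else 0)"
      by (simp add: paths_ending_def)
    also have "\<dots> = (if a \<in> {i..<n} then lam_gap a else 0)"
      using lam_gap_eq_0[of a] i by auto
    finally show "(\<Sum>vs\<in>?ending a. if i \<le> fst (last vs) then path_weight vs else 0)
        = (if a \<in> {i..<n} then lam_gap a else 0)" .
  qed
  also have "\<dots> = (\<Sum>a\<in>{0..n} \<inter> {i..<n}. lam_gap a)" by (rule sum.inter_restrict[symmetric]) simp
  also have "{0..n} \<inter> {i..<n} = {i..<n}" by auto
  also have "(\<Sum>a\<in>{i..<n}. lam_gap a) = lam i - lam n" using sum_lam_gap i by simp
  finally show ?thesis .
qed

lemma GT_ext_path_point:
  assumes "1 \<le> i" "1 \<le> j" "i + j \<le> n + 1"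
  shows "GT_ext n lam path_point (i, j) = lam n + (\<Sum>vs\<in>Ps. path_weight vs * path_indicator vs (i, j))"
proof (cases "i + j \<le> n")
  case True
  then show ?thesis using assms by (simp add: GT_ext_inner path_point_def mem_GT_index)
next
  case False
  then have "i + j = n + 1" "j = n + 1 - i" "i \<le> n" using assms by auto
  then show ?thesis using GT_ext_boundary path_weights_on_boundary assms by simp
qed

lemma path_point_mem_GT_polytope: "path_point \<in> P"
  unfolding mem_GT_polytope_iff
proof (intro conjI allI impI ballI)
  fix p assume "p \<notin> I" then show "path_point p = 0" by (simp add: path_point_def)
next
  fix c assume c: "c \<in> ineqs"
  show "lo path_point c \<le> hi path_point c"
  proof (cases c)
    case (IneqA i j)
    then have ij: "1 \<le> i" "1 \<le> j" "i + j \<le> n" using c by (auto simp: ineqs_def mem_GT_index)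
    have "(\<Sum>vs\<in>Ps. path_weight vs * path_indicator vs (i, j))
        \<le> (\<Sum>vs\<in>Ps. path_weight vs * path_indicator vs (i, j + 1))"
      using path_weight_nonneg path_indicator_le_Suc_col by (intro weighted_sum_mono) blast
    then show ?thesis using IneqA GT_ext_path_point[of i j] GT_ext_path_point[of i "j + 1"] ij by simp
  next
    case (IneqB i j)
    then have ij: "1 \<le> i" "1 \<le> j" "i + j \<le> n" using c by (auto simp: ineqs_def mem_GT_index)
    have "(\<Sum>vs\<in>Ps. path_weight vs * path_indicator vs (i + 1, j))
        \<le> (\<Sum>vs\<in>Ps. path_weight vs * path_indicator vs (i, j))"
      using path_weight_nonneg path_indicator_Suc_row_le Ps_positive by (intro weighted_sum_mono) blast
    then show ?thesis using IneqB GT_ext_path_point[of i j] GT_ext_path_point[of "i + 1" j] ij by simp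
  qed
qed


lemma path_point_strict_IneqA:
  assumes ij: "(i, j) \<in> I"
  shows "lo path_point (IneqA i j) < hi path_point (IneqA i j) \<longleftrightarrow>
    (\<exists>vs\<in>Ps. ((i - 1, j), (i, j)) \<in> walk_edges vs)"
proof -
  have ij': "1 \<le> i" "1 \<le> j" "i + j \<le> n" using ij by (auto simp: mem_GT_index)
  have "lo path_point (IneqA i j) < hi path_point (IneqA i j) \<longleftrightarrow>
      (\<Sum>vs\<in>Ps. path_weight vs * path_indicator vs (i, j)) < (\<Sum>vs\<in>Ps. path_weight vs * path_indicator vs (i, j + 1))"
    using GT_ext_path_point[of i j] GT_ext_path_point[of i "j + 1"] ij' by simp
  also have "\<dots> \<longleftrightarrow> (\<exists>vs\<in>Ps. 0 < path_weight vs \<and> path_indicator vs (i, j) < path_indicator vs (i, j + 1))"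
    by (intro weighted_sum_less_iff finite_paths ballI conjI path_weight_nonneg path_indicator_le_Suc_col)
  also have "\<dots> \<longleftrightarrow> (\<exists>vs\<in>Ps. ((i - 1, j), (i, j)) \<in> walk_edges vs)"
  proof
    assume "\<exists>vs\<in>Ps. 0 < path_weight vs \<and> path_indicator vs (i, j) < path_indicator vs (i, j + 1)"
    then show "\<exists>vs\<in>Ps. ((i - 1, j), (i, j)) \<in> walk_edges vs"
      using path_indicator_jump_col[OF _ ij'(1,2)] Ps_positive by blast
  next
    assume "\<exists>vs\<in>Ps. ((i - 1, j), (i, j)) \<in> walk_edges vs"
    then obtain vs where vs: "vs \<in> Ps" and e: "((i - 1, j), (i, j)) \<in> walk_edges vs" by blast
    have "0 < path_weight vs" using path_weight_pos[OF vs _ ij'(1,2)] walk_edge_vertices[OF e] by simp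
    then show "\<exists>vs\<in>Ps. 0 < path_weight vs \<and> path_indicator vs (i, j) < path_indicator vs (i, j + 1)"
      using path_indicator_jump_col[of vs i j] Ps_positive vs e ij' by blast
  qed
  finally show ?thesis .
qed

lemma path_point_strict_IneqB:
  assumes ij: "(i, j) \<in> I"
  shows "lo path_point (IneqB i j) < hi path_point (IneqB i j) \<longleftrightarrow>
    (\<exists>vs\<in>Ps. ((i, j - 1), (i, j)) \<in> walk_edges vs)"
proof -
  have ij': "1 \<le> i" "1 \<le> j" "i + j \<le> n" using ij by (auto simp: mem_GT_index)
  have "lo path_point (IneqB i j) < hi path_point (IneqB i j) \<longleftrightarrow>
      (\<Sum>vs\<in>Ps. path_weight vs * path_indicator vs (i + 1, j)) < (\<Sum>vs\<in>Ps. path_weight vs * path_indicator vs (i, j))"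
    using GT_ext_path_point[of i j] GT_ext_path_point[of "i + 1" j] ij' by simp
  also have "\<dots> \<longleftrightarrow> (\<exists>vs\<in>Ps. 0 < path_weight vs \<and> path_indicator vs (i + 1, j) < path_indicator vs (i, j))"
    using Ps_positive by (intro weighted_sum_less_iff finite_paths ballI conjI path_weight_nonneg path_indicator_Suc_row_le) blast
  also have "\<dots> \<longleftrightarrow> (\<exists>vs\<in>Ps. ((i, j - 1), (i, j)) \<in> walk_edges vs)"
  proof
    assume "\<exists>vs\<in>Ps. 0 < path_weight vs \<and> path_indicator vs (i + 1, j) < path_indicator vs (i, j)"
    then show "\<exists>vs\<in>Ps. ((i, j - 1), (i, j)) \<in> walk_edges vs"
      using path_indicator_jump_row[OF _ ij] Ps_positive by blast
  next
    assume "\<exists>vs\<in>Ps. ((i, j - 1), (i, j)) \<in> walk_edges vs"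
    then obtain vs where vs: "vs \<in> Ps" and e: "((i, j - 1), (i, j)) \<in> walk_edges vs" by blast
    have "0 < path_weight vs" using path_weight_pos[OF vs _ ij'(1,2)] walk_edge_vertices[OF e] by simp
    then show "\<exists>vs\<in>Ps. 0 < path_weight vs \<and> path_indicator vs (i + 1, j) < path_indicator vs (i, j)"
      using path_indicator_jump_row[of vs i j] Ps_positive vs e ij by blast
  qed
  finally show ?thesis .
qed

lemma path_point_strict_iff:
  "c \<in> ineqs \<Longrightarrow> lo path_point c < hi path_point c \<longleftrightarrow> ineq_edge c \<in> (\<Union>vs\<in>Ps. walk_edges vs)"
  using path_point_strict_IneqA path_point_strict_IneqB by (cases c) (auto simp: ineqs_def)

end


lemma vertical_axis_on_path:
  assumes vs: "positive_path k vs" and la: "last vs = (0, n)" and q: "q < n"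
  shows "((0, q), (0, q + 1)) \<in> walk_edges vs"
proof -
  have col: "fst w = 0" if "w \<in> set vs" for w using positive_path_le_last[OF vs that] la by (simp add: less_eq_prod_def)
  have "\<exists>w\<in>set vs. level w = q" using positive_path_meets_level[OF vs] q by simp
  then have w: "(0, q) \<in> set vs" using col by (metis add_0 prod.collapse)
  then obtain w' where w': "((0, q), w') \<in> walk_edges vs" using positive_path_out_edge[OF vs] q by fastforce
  have "fst w' = 0" using col walk_edge_vertices[OF w'] by blast
  then show ?thesis using w' positive_path_edge_unit_step[OF vs w'] by (auto simp: unit_step_def)
qed

lemma horizontal_axis_on_path:
  assumes vs: "positive_path k vs" and la: "last vs = (n, 0)" and q: "q < n"
  shows "((q, 0), (q + 1, 0)) \<in> walk_edges vs"
proof -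
  have row: "snd w = 0" if "w \<in> set vs" for w using positive_path_le_last[OF vs that] la by (simp add: less_eq_prod_def)
  have "\<exists>w\<in>set vs. level w = q" using positive_path_meets_level[OF vs] q by simp
  then have w: "(q, 0) \<in> set vs" using row by (metis add_0_right prod.collapse)
  then obtain w' where w': "((q, 0), w') \<in> walk_edges vs" using positive_path_out_edge[OF vs] q by fastforce
  have "snd w' = 0" using row walk_edge_vertices[OF w'] by blast
  then show ?thesis using w' positive_path_edge_unit_step[OF vs w'] by (auto simp: unit_step_def)
qed

lemma positive_path_edge_cases:
  assumes vs: "positive_path k vs" and e: "(u, w) \<in> walk_edges vs"
  shows "(u, w) \<in> axis_edges \<or> (\<exists>c\<in>ineqs. (u, w) = ineq_edge c)"
proof -
  obtain a b where u: "u = (a, b)" by (cases u)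
  have "level w \<le> n"
    using positive_path_le_last[OF vs] walk_edge_vertices[OF e] positive_path_level_last[OF vs]
    by (fastforce simp: less_eq_prod_def)
  moreover have "w = (a + 1, b) \<or> w = (a, b + 1)" using positive_path_edge_unit_step[OF vs e] u by (simp add: unit_step_def)
  ultimately consider "w = (a + 1, b)" "b = 0" | "w = (a + 1, b)" "b \<noteq> 0" "a + 1 + b \<le> n"
    | "w = (a, b + 1)" "a = 0" | "w = (a, b + 1)" "a \<noteq> 0" "a + b + 1 \<le> n" by fastforce
  then show ?thesis
  proof cases
    case 1 then show ?thesis using \<open>level w \<le> n\<close> u by (auto simp: axis_edges_def)
  next
    case 2 then show ?thesis using u by (intro disjI2 bexI[of _ "IneqA (a + 1) b"]) (auto simp: mem_GT_index)
  next
    case 3 then show ?thesis using \<open>level w \<le> n\<close> u by (auto simp: axis_edges_def)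
  next
    case 4 then show ?thesis using u by (intro disjI2 bexI[of _ "IneqB a (b + 1)"]) (auto simp: mem_GT_index)
  qed
qed

lemma axis_edges_subset_paths:
  assumes Ps: "\<forall>vs\<in>Ps. positive_path k vs" "terminals k \<subseteq> (\<Union>vs\<in>Ps. set vs)"
  shows "axis_edges \<subseteq> (\<Union>vs\<in>Ps. walk_edges vs)"
proof
  fix e assume "e \<in> axis_edges"
  then consider (V) q where "e = ((0, q), (0, q + 1))" "q < n" | (H) q where "e = ((q, 0), (q + 1, 0))" "q < n"
    using n_pos by (auto simp: axis_edges_def)
  then show "e \<in> (\<Union>vs\<in>Ps. walk_edges vs)"
  proof cases
    case V
    obtain vs where vs: "vs \<in> Ps" "(0, n) \<in> set vs"
      using Ps(2) zero_mem_block_ends by (force simp: mem_terminals_iff)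
    then have "last vs = (0, n)" using last_eq_terminal[OF Ps vs(1), of 0] by simp
    then show ?thesis using vertical_axis_on_path[of vs q] Ps(1) vs(1) V by blast
  next
    case H
    obtain vs where vs: "vs \<in> Ps" "(n, 0) \<in> set vs"
      using Ps(2) n_mem_block_ends by (force simp: mem_terminals_iff)
    then have "last vs = (n, 0)" using last_eq_terminal[OF Ps vs(1), of n] by simp
    then show ?thesis using horizontal_axis_on_path[of vs q] Ps(1) vs(1) H by blast
  qed
qed

lemma Gamma_face_eq_phi:
  assumes Ps: "\<forall>vs\<in>Ps. positive_path k vs" "terminals k \<subseteq> (\<Union>vs\<in>Ps. set vs)"
  defines "F \<equiv> tight_face (strict_ineqs {path_point Ps})"
  shows "F face_of P" "F \<noteq> {}" "phi n lam F = ((\<Union>vs\<in>Ps. set vs), (\<Union>vs\<in>Ps. walk_edges vs))"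
proof -
  let ?x = "path_point Ps" and ?E = "\<Union>vs\<in>Ps. walk_edges vs"
  have x: "?x \<in> P" using path_point_mem_GT_polytope[OF Ps] .
  show "F face_of P" unfolding F_def by (rule tight_face_face_of)
  show "F \<noteq> {}" using mem_tight_face_strict_ineqs_point[OF x] by (auto simp: F_def)
  have S_eq: "strict_ineqs F = {c \<in> ineqs. ineq_edge c \<in> ?E}"
    using strict_ineqs_tight_face_point[OF x] path_point_strict_iff[OF Ps] by (auto simp: F_def strict_ineqs_def)
  have axis_sub: "axis_edges \<subseteq> ?E" using axis_edges_subset_paths[OF Ps] .
  have "face_edges F = ?E"
  proof
    show "face_edges F \<subseteq> ?E" using S_eq axis_sub by (auto simp: face_edges_def)
    show "?E \<subseteq> face_edges F"
    proof clarify
      fix vs u w assume uw: "vs \<in> Ps" "(u, w) \<in> walk_edges vs"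
      then have "(u, w) \<in> axis_edges \<or> (\<exists>c\<in>ineqs. (u, w) = ineq_edge c)"
        using positive_path_edge_cases Ps(1) by blast
      then show "(u, w) \<in> face_edges F"
      proof
        assume "\<exists>c\<in>ineqs. (u, w) = ineq_edge c"
        then obtain c where c: "c \<in> ineqs" "(u, w) = ineq_edge c" by blast
        then have "c \<in> strict_ineqs F" using S_eq uw by auto
        then show ?thesis using c(2) by (auto simp: face_edges_def)
      qed (simp add: face_edges_def)
    qed
  qed
  then show "phi n lam F = ((\<Union>vs\<in>Ps. set vs), ?E)"
    using Field_positive_paths[OF Ps(1)] by (simp add: phi_eq_face_edges)
qed

lemma Gamma_faces_subset_phi_image: "Gamma_faces k \<subseteq> phi n lam ` nonempty_faces P"
proof
  fix H assume "H \<in> Gamma_faces k"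
  then obtain Ps where Ps: "terminals k \<subseteq> fst H" "\<forall>vs\<in>Ps. positive_path k vs"
    "fst H = (\<Union>vs\<in>Ps. set vs)" "snd H = (\<Union>vs\<in>Ps. walk_edges vs)"
    unfolding Gamma_faces_def path_graph_eq by auto
  then have "H = phi n lam (tight_face (strict_ineqs {path_point Ps}))"
    using Gamma_face_eq_phi(3)[of Ps] by (simp add: prod_eq_iff)
  moreover have "tight_face (strict_ineqs {path_point Ps}) \<in> nonempty_faces P"
    using Gamma_face_eq_phi(1,2)[of Ps] Ps by (simp add: nonempty_faces_def)
  ultimately show "H \<in> phi n lam ` nonempty_faces P" by blast
qed

end

section \<open>The rank of \<open>H\<^sub>1\<close>\<close>

context gelfand_tsetlin_blocks
begin

lemma finite_face_edges: "finite (face_edges F)"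
proof (rule finite_subset)
  show "face_edges F \<subseteq> ({0..n} \<times> {0..n}) \<times> ({0..n} \<times> {0..n})"
    using face_edge_level by fastforce
qed simp

lemma finite_Field_face_edges: "finite (Field (face_edges F))"
  using finite_face_edges by (simp add: finite_Field)

lemma origin_in_Field_face_edges: "(0, 0) \<in> Field (face_edges F)"
  using vertical_axis_edge[of 0 F] n_pos FieldI1 by fastforce

text \<open>Every vertex is reached from the origin, so the graph is connected.\<close>
lemma graph_components_phi:
  assumes FP: "F \<subseteq> P"
  shows "graph_components (phi n lam F) = {Field (face_edges F)}"
proof -
  let ?V = "Field (face_edges F)" and ?S = "face_edges F \<union> (face_edges F)\<inverse>"
  have con: "((0, 0), u) \<in> ?S\<^sup>*" if u: "u \<in> ?V" for u
  proof -
    obtain vs where vs: "walk (face_edges F) vs" "hd vs = (0, 0)" "last vs = u"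
      using walk_from_origin[OF FP u] by blast
    then show ?thesis using walk_rtrancl[OF vs(1)] rtrancl_mono[of "face_edges F" ?S] by auto
  qed
  have conn: "(x, y) \<in> ?S\<^sup>*" if "x \<in> ?V" "y \<in> ?V" for x y
  proof -
    have "sym (?S\<^sup>*)" by (rule sym_rtrancl) (auto simp: sym_def)
    then have "(x, (0, 0)) \<in> ?S\<^sup>*" using con[OF that(1)] by (meson symD)
    then show ?thesis using con[OF that(2)] by (rule rtrancl_trans)
  qed
  have "{(u, v). u \<in> ?V \<and> v \<in> ?V \<and> (u, v) \<in> ?S\<^sup>*} `` {x} = ?V" if x: "x \<in> ?V" for x
  proof
    show "?V \<subseteq> {(u, v). u \<in> ?V \<and> v \<in> ?V \<and> (u, v) \<in> ?S\<^sup>*} `` {x}"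
    proof
      fix y assume "y \<in> ?V"
      then show "y \<in> {(u, v). u \<in> ?V \<and> v \<in> ?V \<and> (u, v) \<in> ?S\<^sup>*} `` {x}" using conn[OF x] x by simp
    qed
  qed auto
  then show ?thesis
    using origin_in_Field_face_edges[of F] by (auto simp: graph_components_def phi_eq_face_edges quotient_def)
qed

lemma snd_face_edges:
  assumes FP: "F \<subseteq> P"
  shows "snd ` face_edges F = Field (face_edges F) - {(0, 0)}"
proof
  show "snd ` face_edges F \<subseteq> Field (face_edges F) - {(0, 0)}"
    using face_edge_level by (force intro: FieldI2)
  show "Field (face_edges F) - {(0, 0)} \<subseteq> snd ` face_edges F"
    using face_vertex_in_edge[OF FP] by force
qed

lemma corner_cells_eq_targets:
  "snd ` horizontal_edges (face_edges F) \<inter> snd ` vertical_edges (face_edges F) = corner_cells F"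
proof
  show "snd ` horizontal_edges (face_edges F) \<inter> snd ` vertical_edges (face_edges F) \<subseteq> corner_cells F"
  proof
    fix w assume "w \<in> snd ` horizontal_edges (face_edges F) \<inter> snd ` vertical_edges (face_edges F)"
    then obtain u u' where "(u, w) \<in> horizontal_edges (face_edges F)" "(u', w) \<in> vertical_edges (face_edges F)"
      by force
    moreover obtain a b where w: "w = (a, b)" by (cases w)
    ultimately have uv: "((a - 1, b), (a, b)) \<in> face_edges F" "((a, b - 1), (a, b)) \<in> face_edges F" "1 \<le> a" "1 \<le> b"
      by (cases u; cases u'; auto simp: horizontal_edges_def vertical_edges_def)+
    then have "IneqA a b \<in> strict_ineqs F" "IneqB a b \<in> strict_ineqs F"
      using in_edge_iff[OF uv(3,4)] by auto
    then show "w \<in> corner_cells F" using strict_ineqs_subset[of F] w by (auto simp: corner_cells_def)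
  qed
  show "corner_cells F \<subseteq> snd ` horizontal_edges (face_edges F) \<inter> snd ` vertical_edges (face_edges F)"
  proof
    fix w assume w: "w \<in> corner_cells F"
    obtain a b where ab_def: "w = (a, b)" by (cases w)
    then have ab: "1 \<le> a" "1 \<le> b" "IneqA a b \<in> strict_ineqs F" "IneqB a b \<in> strict_ineqs F"
      using w by (auto simp: corner_cells_def mem_GT_index)
    then have "((a - 1, b), w) \<in> horizontal_edges (face_edges F)" "((a, b - 1), w) \<in> vertical_edges (face_edges F)"
      using in_edge_iff[OF ab(1,2)] ab_def by (auto simp: horizontal_edges_def vertical_edges_def)
    then show "w \<in> snd ` horizontal_edges (face_edges F) \<inter> snd ` vertical_edges (face_edges F)"
      by (metis IntI image_eqI snd_conv)
  qed
qed

text \<open>Every vertex except the origin has one or two incoming edges, two exactly at corner cells.\<close>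
lemma card_face_edges:
  assumes FP: "F \<subseteq> P"
  shows "card (face_edges F) + 1 = card (Field (face_edges F)) + card (corner_cells F)"
proof -
  let ?H = "snd ` horizontal_edges (face_edges F)" and ?V = "snd ` vertical_edges (face_edges F)"
  have fin: "finite ?H" "finite ?V"
    using finite_subset[OF horizontal_edges_subset finite_face_edges]
      finite_subset[OF vertical_edges_subset finite_face_edges] by simp_all
  have "?H \<union> ?V = Field (face_edges F) - {(0, 0)}"
    using unit_steps_split[OF unit_steps_face_edges] snd_face_edges[OF FP] by (metis image_Un)
  then have "card ?H + card ?V = card (Field (face_edges F)) - 1 + card (corner_cells F)"
    using card_Un_Int[OF fin] corner_cells_eq_targets finite_Field_face_edges origin_in_Field_face_edges by simp
  moreover have "card (Field (face_edges F)) \<ge> 1"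
    using finite_Field_face_edges origin_in_Field_face_edges by (metis One_nat_def Suc_leI card_gt_0_iff empty_iff)
  ultimately show ?thesis using card_unit_steps[OF finite_face_edges unit_steps_face_edges] by simp
qed

lemma graph_dim_phi: "F \<subseteq> P \<Longrightarrow> graph_dim (phi n lam F) = int (card (corner_cells F))"
  using card_face_edges[of F] graph_components_phi[of F] by (simp add: graph_dim_def phi_eq_face_edges)

end

theorem lemma2p6:
  fixes k :: "nat list" and lam :: "nat \<Rightarrow> real" and n :: nat
  assumes "k \<noteq> []"
    and "\<forall>a \<in> set k. 0 < a"
    and "n = sum_list k"
    and "\<forall>l \<in> {1..length k}. \<forall>a \<in> {psum k (l - 1) <.. psum k l}. \<forall>b \<in> {psum k (l - 1) <.. psum k l}.
           lam a = lam b"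
    and "\<forall>l \<in> {1..<length k}. lam (psum k l) > lam (psum k l + 1)"
  shows "bij_betw (phi n lam) (nonempty_faces (GT_polytope n lam)) (Gamma_faces k) \<and>
         (\<forall>F \<in> nonempty_faces (GT_polytope n lam). \<forall>G \<in> nonempty_faces (GT_polytope n lam).
            F \<subseteq> G \<longleftrightarrow> subgraph_le (phi n lam F) (phi n lam G)) \<and>
         (\<forall>F \<in> nonempty_faces (GT_polytope n lam).
            graph_dim (phi n lam F) = int (affine_dim F))"
proof -
  interpret gelfand_tsetlin_blocks n lam k
    using assms by unfold_locales
  have order: "\<forall>F \<in> nonempty_faces P. \<forall>G \<in> nonempty_faces P.
      F \<subseteq> G \<longleftrightarrow> subgraph_le (phi n lam F) (phi n lam G)"
    using face_subset_iff_subgraph_le by (simp add: nonempty_faces_def)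
  have inj: "inj_on (phi n lam) (nonempty_faces P)"
  proof (rule inj_onI)
    fix F G assume "F \<in> nonempty_faces P" "G \<in> nonempty_faces P" "phi n lam F = phi n lam G"
    then have "F \<subseteq> G" "G \<subseteq> F" using order by (simp_all add: subgraph_le_def)
    then show "F = G" by (rule subset_antisym)
  qed
  have "phi n lam ` nonempty_faces P \<subseteq> Gamma_faces k"
    by (rule image_subsetI) (simp add: nonempty_faces_def phi_mem_Gamma_faces)
  then have image: "phi n lam ` nonempty_faces P = Gamma_faces k"
    using Gamma_faces_subset_phi_image by (rule subset_antisym)
  have dim: "graph_dim (phi n lam F) = int (affine_dim F)" if "F \<in> nonempty_faces P" for F
  proof -
    have F: "F face_of P" "F \<noteq> {}" using that by (simp_all add: nonempty_faces_def)
    then show ?thesis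
      using graph_dim_phi[OF face_of_imp_subset[OF F(1)]] affine_dim_face_eq_card_corner_cells[OF F] by simp
  qed
  show ?thesis using inj image order dim by (simp add: bij_betw_def)
qed

end
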